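(* For all $g,h\in C^\infty_c(\mathbb R^d)$, $k\in\mathbb R^d\setminus\{0\}$ and $\varepsilon>0$, $$\big|\langle h,(\varepsilon+ik\cdot v)^{-1}g\rangle\big|\lesssim|k|^{-1}\big(\|\langle\nabla\rangle h\|\,\|g\|+\|h\|\,\|\nabla g\|\big),$$ where $\langle h,f\rangle=\int_{\mathbb R^d}\overline{h}f\,dv$, $\|\cdot\|$ is the $L^2(\mathbb R^d)$ norm, and the constant depends only on $d$.
   Context: $\|\langle\nabla\rangle h\|$ denotes the $H^1(\mathbb R^d)$ norm of $h$, i.e. $\|(1-\Delta)^{1/2}h\|_{L^2}$. *)

theory Defs
  imports "HOL-Analysis.Analysis"
begin

definition partial_deriv :: "('a::euclidean_space \<Rightarrow> complex) \<Rightarrow> 'a \<Rightarrow> 'a \<Rightarrow> complex" where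
  "partial_deriv f b v = frechet_derivative f (at v) b"

fun Ck :: "nat \<Rightarrow> ('a::euclidean_space \<Rightarrow> complex) \<Rightarrow> bool" where
  "Ck 0 f = continuous_on UNIV f"
| "Ck (Suc n) f = ((\<forall>v. f differentiable (at v)) \<and> (\<forall>b\<in>Basis. Ck n (partial_deriv f b)))"

definition smooth :: "('a::euclidean_space \<Rightarrow> complex) \<Rightarrow> bool" where
  "smooth f = (\<forall>n. Ck n f)"

definition Cc_inf :: "('a::euclidean_space \<Rightarrow> complex) \<Rightarrow> bool" where
  "Cc_inf f = (smooth f \<and> compact (closure {v. f v \<noteq> 0}))"

definition L2norm :: "('a::euclidean_space \<Rightarrow> complex) \<Rightarrow> real" where
  "L2norm f = sqrt (\<integral>v. (cmod (f v))^2 \<partial>lborel)"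

definition grad_L2norm :: "('a::euclidean_space \<Rightarrow> complex) \<Rightarrow> real" where
  "grad_L2norm f = sqrt (\<integral>v. (\<Sum>b\<in>Basis. (cmod (partial_deriv f b v))^2) \<partial>lborel)"

text \<open>H^1 norm \<parallel>\<langle>\<nabla>\<rangle>h\<parallel> = \<parallel>(1-\<Delta>)^(1/2) h\<parallel>, which by Plancherel equals
  (\<parallel>h\<parallel>^2 + \<parallel>\<nabla>h\<parallel>^2)^(1/2).\<close>
definition H1norm :: "('a::euclidean_space \<Rightarrow> complex) \<Rightarrow> real" where
  "H1norm f = sqrt ((L2norm f)^2 + (grad_L2norm f)^2)"

definition resolvent_pairing :: "('a::euclidean_space \<Rightarrow> complex) \<Rightarrow> real \<Rightarrow> 'a \<Rightarrow> ('a \<Rightarrow> complex) \<Rightarrow> complex" where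
  "resolvent_pairing h \<epsilon> k g = (\<integral>v. cnj (h v) * g v / (complex_of_real \<epsilon> + \<i> * complex_of_real (k \<bullet> v)) \<partial>lborel)"

end

theory Submission
  imports Defs
begin

text \<open>
  Scaling by \<open>|k|\<close> reduces the estimate to a unit direction \<open>u\<close> and \<open>\<delta> = \<epsilon> / |k|\<close>.
  On each line \<open>p + s u\<close> write \<open>1 / (\<delta> + i s)\<close> as the Poisson kernel \<open>\<delta> / (\<delta>\<^sup>2 + s\<^sup>2)\<close>,
  whose integral is at most \<open>\<pi>\<close>, minus \<open>i\<close> times the odd kernel \<open>s / (\<delta>\<^sup>2 + s\<^sup>2)\<close>, which is
  at most \<open>1 / |s|\<close>.  Against \<open>conj H * G\<close> the Poisson part costs \<open>sup |H| sup |G|\<close>, and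
  \<open>|H|\<^sup>2 \<le> 2 \<integral> |H| |H'|\<close>.  The odd part is cut at \<open>|s| = \<rho>\<^sup>2\<close>: beyond, Cauchy-Schwarz
  against \<open>1 / s\<close> gives \<open>sup |H| \<parallel>G\<parallel> / \<rho>\<close>; within, oddness leaves only the odd part of
  \<open>conj H * G\<close>, which is \<open>O(\<surd>|s|)\<close> by the fundamental theorem of calculus, giving
  \<open>\<rho> (sup |H| \<parallel>G'\<parallel> + sup |G| \<parallel>H'\<parallel>)\<close>.  The lines in direction \<open>u\<close> are indexed by the
  slab \<open>0 \<le> u \<bullet> v \<le> 1\<close>; integrating the line estimates over it with Cauchy-Schwarz and
  optimising in \<open>\<rho>\<close> gives the bound with constant 10.
\<close>

lemma le_add_optimal_scale:
  fixes X c \<alpha> \<beta> :: real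
  assumes bound: "\<And>\<rho>. 0 < \<rho> \<Longrightarrow> X \<le> c + \<alpha> / \<rho> + \<beta> * \<rho>" and "0 \<le> \<alpha>" "0 \<le> \<beta>"
  shows "X \<le> c + 2 * sqrt (\<alpha> * \<beta>)"
proof -
  consider "0 < \<alpha>" "0 < \<beta>" | "\<alpha> = 0" | "\<beta> = 0"
    using assms(2,3) by linarith
  then show ?thesis
  proof cases
    case 1
    define \<rho> where "\<rho> = sqrt (\<alpha> / \<beta>)"
    have "\<alpha> / \<rho> = sqrt (\<alpha> * \<beta>)" "\<beta> * \<rho> = sqrt (\<alpha> * \<beta>)"
      using 1 by (simp_all add: \<rho>_def real_sqrt_divide real_sqrt_mult field_simps)
    then show ?thesis using bound[of \<rho>] 1 by (simp add: \<rho>_def)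
  next
    case 2
    have "X \<le> c + e" if "0 < e" for e
    proof -
      have "\<beta> * (e / (\<beta> + 1)) \<le> e"
        using that \<open>0 \<le> \<beta>\<close> by (simp add: field_simps)
      then show ?thesis using bound[of "e / (\<beta> + 1)"] that 2 \<open>0 \<le> \<beta>\<close> by simp
    qed
    then show ?thesis using 2 by (simp add: field_le_epsilon)
  next
    case 3
    have "X \<le> c + e" if "0 < e" for e
    proof -
      have "\<alpha> / ((\<alpha> + 1) / e) \<le> e"
        using that \<open>0 \<le> \<alpha>\<close> by (simp add: field_simps)
      then show ?thesis using bound[of "(\<alpha> + 1) / e"] that 3 \<open>0 \<le> \<alpha>\<close> by simp
    qed
    then show ?thesis using 3 by (simp add: field_le_epsilon)
  qed
qed

lemma le_sqrt_mult_if_le_weighted_sum: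
  fixes X A B :: real
  assumes "\<And>\<theta>. 0 < \<theta> \<Longrightarrow> 2 * X \<le> \<theta> * A + B / \<theta>" and "0 \<le> A" "0 \<le> B"
  shows "X \<le> sqrt A * sqrt B"
proof -
  have "X \<le> 0 + (B / 2) / \<theta> + (A / 2) * \<theta>" if "0 < \<theta>" for \<theta>
    using assms(1)[OF that] by (simp add: field_simps)
  then have "X \<le> 0 + 2 * sqrt (B / 2 * (A / 2))"
    by (rule le_add_optimal_scale) (use assms in auto)
  also have "\<dots> = sqrt A * sqrt B"
    by (simp add: real_sqrt_mult real_sqrt_divide)
  finally show ?thesis by simp
qed

lemma mult_le_weighted_squares:
  fixes a b \<theta> :: real
  assumes "0 < \<theta>"
  shows "2 * (a * b) \<le> \<theta> * a\<^sup>2 + b\<^sup>2 / \<theta>"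
proof -
  have "0 \<le> (\<theta> * a - b)\<^sup>2 / \<theta>" using assms by simp
  also have "\<dots> = \<theta> * a\<^sup>2 + b\<^sup>2 / \<theta> - 2 * (a * b)"
    using assms by (simp add: power2_eq_square field_simps)
  finally show ?thesis by simp
qed

lemma Cauchy_Schwarz_integral:
  fixes f g :: "'a \<Rightarrow> real"
  assumes [measurable]: "f \<in> borel_measurable M" "g \<in> borel_measurable M"
    and f2: "integrable M (\<lambda>x. (f x)\<^sup>2)" and g2: "integrable M (\<lambda>x. (g x)\<^sup>2)"
  shows "integrable M (\<lambda>x. f x * g x)"
    and "(\<integral>x. f x * g x \<partial>M) \<le> sqrt (\<integral>x. (f x)\<^sup>2 \<partial>M) * sqrt (\<integral>x. (g x)\<^sup>2 \<partial>M)"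
proof -
  show fg: "integrable M (\<lambda>x. f x * g x)"
  proof (rule Bochner_Integration.integrable_bound)
    show "integrable M (\<lambda>x. ((f x)\<^sup>2 + (g x)\<^sup>2) / 2)" using f2 g2 by simp
    show "AE x in M. norm (f x * g x) \<le> norm (((f x)\<^sup>2 + (g x)\<^sup>2) / 2)"
      using mult_le_weighted_squares[of 1 "\<bar>f x\<bar>" "\<bar>g x\<bar>" for x] by (simp add: abs_mult algebra_simps)
  qed simp
  show "(\<integral>x. f x * g x \<partial>M) \<le> sqrt (\<integral>x. (f x)\<^sup>2 \<partial>M) * sqrt (\<integral>x. (g x)\<^sup>2 \<partial>M)"
  proof (rule le_sqrt_mult_if_le_weighted_sum)
    fix \<theta> :: real assume "0 < \<theta>"
    have "2 * (\<integral>x. f x * g x \<partial>M) = (\<integral>x. 2 * (f x * g x) \<partial>M)" by simp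
    also have "\<dots> \<le> (\<integral>x. \<theta> * (f x)\<^sup>2 + (g x)\<^sup>2 / \<theta> \<partial>M)"
      using fg f2 g2 mult_le_weighted_squares[OF \<open>0 < \<theta>\<close>] by (intro integral_mono) auto
    also have "\<dots> = \<theta> * (\<integral>x. (f x)\<^sup>2 \<partial>M) + (\<integral>x. (g x)\<^sup>2 \<partial>M) / \<theta>"
      using f2 g2 by simp
    finally show "2 * (\<integral>x. f x * g x \<partial>M) \<le> \<theta> * (\<integral>x. (f x)\<^sup>2 \<partial>M) + (\<integral>x. (g x)\<^sup>2 \<partial>M) / \<theta>" .
  qed auto
qed

lemma Cauchy_Schwarz_integral_on:
  fixes f g :: "'a::euclidean_space \<Rightarrow> real"
  assumes f2: "(\<lambda>x. (f x)\<^sup>2) integrable_on S" and g2: "(\<lambda>x. (g x)\<^sup>2) integrable_on S"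
    and fg: "(\<lambda>x. f x * g x) integrable_on S"
  shows "integral S (\<lambda>x. f x * g x) \<le> sqrt (integral S (\<lambda>x. (f x)\<^sup>2)) * sqrt (integral S (\<lambda>x. (g x)\<^sup>2))"
proof (rule le_sqrt_mult_if_le_weighted_sum)
  fix \<theta> :: real assume "0 < \<theta>"
  have f2': "(\<lambda>x. \<theta> * (f x)\<^sup>2) integrable_on S" and g2': "(\<lambda>x. (g x)\<^sup>2 / \<theta>) integrable_on S"
    using integrable_on_cmult_left[OF f2] integrable_on_divide[OF g2] by auto
  have "2 * integral S (\<lambda>x. f x * g x) = integral S (\<lambda>x. 2 * (f x * g x))" by simp
  also have "\<dots> \<le> integral S (\<lambda>x. \<theta> * (f x)\<^sup>2 + (g x)\<^sup>2 / \<theta>)"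
    using fg f2' g2' mult_le_weighted_squares[OF \<open>0 < \<theta>\<close>]
    by (intro integral_le integrable_add integrable_on_cmult_left) auto
  also have "\<dots> = \<theta> * integral S (\<lambda>x. (f x)\<^sup>2) + integral S (\<lambda>x. (g x)\<^sup>2) / \<theta>"
    using f2' g2' f2 g2 by (simp add: integral_add integral_divide)
  finally show "2 * integral S (\<lambda>x. f x * g x) \<le> \<theta> * integral S (\<lambda>x. (f x)\<^sup>2) + integral S (\<lambda>x. (g x)\<^sup>2) / \<theta>" .
qed (auto intro: integral_nonneg f2 g2)

lemma L2norm_nonneg: "0 \<le> L2norm f"
  unfolding L2norm_def by (simp add: Bochner_Integration.integral_nonneg)

lemma integrable_lborel_vanishing_outside_ball:
  fixes q :: "'a::euclidean_space \<Rightarrow> 'b::{banach, second_countable_topology}"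
  assumes c: "continuous_on UNIV q" and vanish: "\<And>v. B \<le> norm v \<Longrightarrow> q v = 0"
  shows "integrable lborel q"
proof -
  have "integrable lborel (\<lambda>v. indicator (cball 0 B) v *\<^sub>R q v)"
    by (rule borel_integrable_compact) (auto intro: continuous_on_subset[OF c])
  moreover have "(\<lambda>v. indicator (cball 0 B) v *\<^sub>R q v) = q"
    using vanish by (intro ext) (auto simp: indicator_def)
  ultimately show ?thesis by metis
qed

lemma integral_vanishing_outside_interval:
  fixes q :: "real \<Rightarrow> 'b::euclidean_space"
  assumes c: "continuous_on UNIV q" and vanish: "\<And>x. M \<le> \<bar>x\<bar> \<Longrightarrow> q x = 0"
  shows "q integrable_on UNIV" and "integral UNIV q = integral {-M..M} q"
    and "integrable lborel q" and "(\<integral>x. q x \<partial>lborel) = integral UNIV q"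
proof -
  have q_eq: "q = (\<lambda>x. if x \<in> {-M..M} then q x else 0)"
    using vanish by (intro ext) auto
  have "q integrable_on {-M..M}"
    by (rule integrable_continuous_interval) (rule continuous_on_subset[OF c], auto)
  then show "q integrable_on UNIV"
    by (subst q_eq) (simp only: integrable_restrict_UNIV)
  show "integral UNIV q = integral {-M..M} q"
    by (subst q_eq) (simp only: integral_restrict_UNIV)
  show i: "integrable lborel q"
    using vanish by (intro integrable_lborel_vanishing_outside_ball[OF c]) auto
  show "(\<integral>x. q x \<partial>lborel) = integral UNIV q"
    using integral_lborel[OF i] by simp
qed

lemma L2norm_eq_sqrt_integral_UNIV:
  fixes G :: "real \<Rightarrow> complex"
  assumes "continuous_on UNIV G" and "\<And>s. M \<le> \<bar>s\<bar> \<Longrightarrow> G s = 0"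
  shows "L2norm G = sqrt (integral UNIV (\<lambda>s. (cmod (G s))\<^sup>2))"
  unfolding L2norm_def
  by (subst integral_vanishing_outside_interval(4)[of _ M]) (auto intro!: continuous_intros assms)

lemma sqrt_integral_interval_le_L2norm:
  fixes G :: "real \<Rightarrow> complex"
  assumes c: "continuous_on UNIV G" and vanish: "\<And>s. M \<le> \<bar>s\<bar> \<Longrightarrow> G s = 0"
  shows "sqrt (integral {a..b} (\<lambda>s. (cmod (G s))\<^sup>2)) \<le> L2norm G"
proof -
  have c2: "continuous_on UNIV (\<lambda>s. (cmod (G s))\<^sup>2)" by (intro continuous_intros c)
  have "integral {a..b} (\<lambda>s. (cmod (G s))\<^sup>2) \<le> integral UNIV (\<lambda>s. (cmod (G s))\<^sup>2)"
    by (rule integral_subset_le)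
       (auto intro!: integral_vanishing_outside_interval(1)[OF c2, of M] vanish
             integrable_continuous_interval continuous_on_subset[OF c2])
  then show ?thesis
    using L2norm_eq_sqrt_integral_UNIV[OF assms] by simp
qed

lemma norm_sq_le_integral_interval_norm_mult_deriv:
  fixes H H' :: "real \<Rightarrow> complex"
  assumes H: "\<And>s. (H has_vector_derivative H' s) (at s)" and cH': "continuous_on UNIV H'"
    and "H a = 0" and "a \<le> s"
  shows "(cmod (H s))\<^sup>2 \<le> 2 * integral {a..s} (\<lambda>x. cmod (H x) * cmod (H' x))"
proof -
  have cH: "continuous_on UNIV H"
    using H by (intro continuous_at_imp_continuous_on ballI has_vector_derivative_continuous) auto
  define D where "D x = cnj (H x) * H' x + cnj (H' x) * H x" for x
  have "(D has_integral (cnj (H s) * H s - cnj (H a) * H a)) {a..s}"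
  proof (rule fundamental_theorem_of_calculus)
    fix x
    show "((\<lambda>x. cnj (H x) * H x) has_vector_derivative D x) (at x within {a..s})"
      unfolding D_def
      by (rule has_vector_derivative_at_within,
          rule has_vector_derivative_mult[OF has_vector_derivative_cnj[OF H] H])
  qed (use \<open>a \<le> s\<close> in simp)
  moreover have "cnj (H s) * H s = complex_of_real ((cmod (H s))\<^sup>2)"
    by (subst complex_norm_square) (simp add: mult.commute)
  ultimately have "(cmod (H s))\<^sup>2 = cmod (integral {a..s} D)"
    using \<open>H a = 0\<close> by (simp add: integral_unique norm_power)
  also have "\<dots> \<le> integral {a..s} (\<lambda>x. 2 * (cmod (H x) * cmod (H' x)))"
  proof (rule integral_norm_bound_integral)
    show "D integrable_on {a..s}" "(\<lambda>x. 2 * (cmod (H x) * cmod (H' x))) integrable_on {a..s}"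
      unfolding D_def by (auto intro!: integrable_continuous_interval continuous_intros
          continuous_on_subset[OF cH] continuous_on_subset[OF cH'])
    show "cmod (D x) \<le> 2 * (cmod (H x) * cmod (H' x))" for x
      unfolding D_def by (rule order_trans[OF norm_triangle_ineq]) (simp add: norm_mult)
  qed
  finally show ?thesis by simp
qed

lemma norm_sq_le_integral_norm_mult_deriv:
  fixes H H' :: "real \<Rightarrow> complex"
  assumes H: "\<And>s. (H has_vector_derivative H' s) (at s)" and cH': "continuous_on UNIV H'"
    and vanish: "\<And>s. M \<le> \<bar>s\<bar> \<Longrightarrow> H s = 0"
  shows "(cmod (H s))\<^sup>2 \<le> 2 * (\<integral>x. cmod (H x) * cmod (H' x) \<partial>lborel)"
proof -
  define A where "A x = cmod (H x) * cmod (H' x)" for x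
  have cA: "continuous_on UNIV A"
    using H unfolding A_def
    by (intro continuous_intros cH' continuous_at_imp_continuous_on ballI has_vector_derivative_continuous) auto
  have A_int: "A integrable_on {a..b}" for a b
    by (rule integrable_continuous_interval) (rule continuous_on_subset[OF cA], auto)
  have "(cmod (H s))\<^sup>2 \<le> 2 * integral {-M..M} A"
  proof (cases "M \<le> \<bar>s\<bar>")
    case True
    then show ?thesis
      using vanish[OF True] integral_nonneg[OF A_int, of "-M" M] by (simp add: A_def)
  next
    case False
    then have "(cmod (H s))\<^sup>2 \<le> 2 * integral {-M..s} A"
      unfolding A_def by (intro norm_sq_le_integral_interval_norm_mult_deriv[OF H cH']) (auto intro: vanish)
    also have "\<dots> \<le> 2 * integral {-M..M} A"
      using False by (intro mult_left_mono integral_subset_le A_int) (auto simp: A_def)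
    finally show ?thesis .
  qed
  moreover have "(\<integral>x. A x \<partial>lborel) = integral {-M..M} A"
    using integral_vanishing_outside_interval(2,4)[OF cA, of M] vanish by (simp add: A_def)
  ultimately show ?thesis by (simp add: A_def)
qed

lemma norm_diff_reflect_le:
  fixes G G' :: "real \<Rightarrow> complex"
  assumes G: "\<And>s. (G has_vector_derivative G' s) (at s)" and cG': "continuous_on UNIV G'"
    and vanish: "\<And>s. M \<le> \<bar>s\<bar> \<Longrightarrow> G' s = 0" and "0 \<le> x"
  shows "cmod (G x - G (-x)) \<le> sqrt (2 * x) * L2norm G'"
proof -
  have ftc: "(G' has_integral (G x - G (-x))) {-x..x}"
    by (rule fundamental_theorem_of_calculus)
       (use \<open>0 \<le> x\<close> in \<open>auto intro: has_vector_derivative_at_within G\<close>)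
  have "cmod (G x - G (-x)) = cmod (integral {-x..x} G')" using integral_unique[OF ftc] by simp
  also have "\<dots> \<le> integral {-x..x} (\<lambda>s. 1 * cmod (G' s))"
    by (rule integral_norm_bound_integral)
       (auto intro!: integrable_continuous_interval continuous_on_subset[OF cG'] continuous_intros)
  also have "\<dots> \<le> sqrt (integral {-x..x} (\<lambda>s. 1\<^sup>2)) * sqrt (integral {-x..x} (\<lambda>s. (cmod (G' s))\<^sup>2))"
    by (rule Cauchy_Schwarz_integral_on)
       (auto intro!: integrable_continuous_interval continuous_on_subset[OF cG'] continuous_intros)
  also have "integral {-x..x} (\<lambda>s. (1::real)\<^sup>2) = 2 * x"
    using \<open>0 \<le> x\<close> by simp
  also have "sqrt (integral {-x..x} (\<lambda>s. (cmod (G' s))\<^sup>2)) \<le> L2norm G'"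
    by (rule sqrt_integral_interval_le_L2norm[OF cG' vanish])
  finally show ?thesis
    using \<open>0 \<le> x\<close> by (simp add: mult_left_mono)
qed

lemma norm_integral_symmetric_le:
  fixes \<Phi> :: "real \<Rightarrow> complex"
  assumes c\<Phi>: "continuous_on {-R..R} \<Phi>" and "0 \<le> R" and "0 \<le> C"
    and bound: "\<And>x. x \<in> {0..R} \<Longrightarrow> cmod (\<Phi> x + \<Phi> (-x)) \<le> C * x powr (-1/2)"
  shows "cmod (integral {-R..R} \<Phi>) \<le> 2 * C * sqrt R"
proof -
  have c_pos: "continuous_on {0..R} \<Phi>" by (rule continuous_on_subset[OF c\<Phi>]) auto
  have c_neg: "continuous_on {0..R} (\<lambda>x. \<Phi> (-x))"
    by (rule continuous_on_compose2[OF c\<Phi>]) (auto intro!: continuous_intros)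
  have "integral {-R..R} \<Phi> = integral {-R..0} \<Phi> + integral {0..R} \<Phi>"
    using \<open>0 \<le> R\<close> integrable_continuous_interval[OF c\<Phi>]
    by (simp add: Henstock_Kurzweil_Integration.integral_combine)
  also have "integral {-R..0} \<Phi> = integral {0..R} (\<lambda>x. \<Phi> (-x))"
    using Henstock_Kurzweil_Integration.integral_reflect_real[of 0 "-R" \<Phi>] by simp
  also have "integral {0..R} (\<lambda>x. \<Phi> (-x)) + integral {0..R} \<Phi> = integral {0..R} (\<lambda>x. \<Phi> x + \<Phi> (-x))"
    using c_pos c_neg by (subst integral_add) (auto intro!: integrable_continuous_interval)
  finally have split: "integral {-R..R} \<Phi> = integral {0..R} (\<lambda>x. \<Phi> x + \<Phi> (-x))" .
  have powr: "((\<lambda>x. x powr (-1/2)) has_integral (R powr (1/2) / (1/2))) {0..R}"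
    using has_integral_powr_from_0[of "-1/2" R] \<open>0 \<le> R\<close> by simp
  have "cmod (integral {0..R} (\<lambda>x. \<Phi> x + \<Phi> (-x))) \<le> integral {0..R} (\<lambda>x. C * x powr (-1/2))"
    using c_pos c_neg bound
    by (intro integral_norm_bound_integral integrable_continuous_interval continuous_on_add
        integrable_on_mult_right[OF has_integral_integrable[OF powr]]) auto
  also have "\<dots> = 2 * C * sqrt R"
    using integral_unique[OF powr] \<open>0 \<le> R\<close> by (simp add: powr_half_sqrt)
  finally show ?thesis unfolding split .
qed

section \<open>The Poisson kernel and its conjugate\<close>

definition poisson_kernel :: "real \<Rightarrow> real \<Rightarrow> real" where
  "poisson_kernel \<delta> s = \<delta> / (\<delta>\<^sup>2 + s\<^sup>2)"

definition conj_poisson_kernel :: "real \<Rightarrow> real \<Rightarrow> real" where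
  "conj_poisson_kernel \<delta> s = s / (\<delta>\<^sup>2 + s\<^sup>2)"

lemma divide_resolvent_eq:
  assumes "0 < \<delta>"
  shows "z / (complex_of_real \<delta> + \<i> * complex_of_real s)
    = z * complex_of_real (poisson_kernel \<delta> s) - \<i> * (z * complex_of_real (conj_poisson_kernel \<delta> s))"
proof -
  have pos: "0 < \<delta>\<^sup>2 + s\<^sup>2" using assms by (simp add: add_pos_nonneg)
  define w where "w = complex_of_real \<delta> + \<i> * complex_of_real s"
  define Q where "Q = complex_of_real (poisson_kernel \<delta> s) - \<i> * complex_of_real (conj_poisson_kernel \<delta> s)"
  have "w * Q = 1"
    using pos assms by (simp add: w_def Q_def complex_eq_iff poisson_kernel_def conj_poisson_kernel_def
        power2_eq_square add_divide_distrib[symmetric])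
  have "w \<noteq> 0"
    using assms by (simp add: w_def complex_eq_iff)
  have "z / w = z * (w * Q) / w" using \<open>w * Q = 1\<close> by simp
  also have "\<dots> = z * Q" using \<open>w \<noteq> 0\<close> by (simp add: field_simps)
  finally show ?thesis by (simp add: w_def Q_def algebra_simps)
qed

lemma continuous_on_poisson_kernel: "0 < \<delta> \<Longrightarrow> continuous_on UNIV (poisson_kernel \<delta>)"
  unfolding poisson_kernel_def
  by (intro continuous_intros) (auto simp: add_pos_nonneg less_imp_neq[symmetric])

lemma continuous_on_conj_poisson_kernel: "0 < \<delta> \<Longrightarrow> continuous_on UNIV (conj_poisson_kernel \<delta>)"
  unfolding conj_poisson_kernel_def
  by (intro continuous_intros) (auto simp: add_pos_nonneg less_imp_neq[symmetric])

lemma poisson_kernel_nonneg: "0 \<le> \<delta> \<Longrightarrow> 0 \<le> poisson_kernel \<delta> s"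
  by (simp add: poisson_kernel_def)

lemma has_integral_poisson_kernel:
  assumes "0 < \<delta>" and "a \<le> b"
  shows "(poisson_kernel \<delta> has_integral (arctan (b / \<delta>) - arctan (a / \<delta>))) {a..b}"
proof (rule fundamental_theorem_of_calculus)
  fix x
  have "((\<lambda>s. arctan (s / \<delta>)) has_real_derivative poisson_kernel \<delta> x) (at x)"
    using assms by (auto intro!: derivative_eq_intros simp: poisson_kernel_def field_simps power2_eq_square)
  then show "((\<lambda>s. arctan (s / \<delta>)) has_vector_derivative poisson_kernel \<delta> x) (at x within {a..b})"
    by (simp add: has_real_derivative_iff_has_vector_derivative has_vector_derivative_at_within)
qed (use assms in simp)

lemma norm_integral_mult_poisson_kernel_le:
  fixes F :: "real \<Rightarrow> complex"
  assumes cF: "continuous_on UNIV F" and F: "\<And>s. cmod (F s) \<le> C" and "0 < \<delta>" and "0 \<le> M"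
  shows "cmod (integral {-M..M} (\<lambda>s. F s * complex_of_real (poisson_kernel \<delta> s))) \<le> pi * C"
proof -
  have P: "(poisson_kernel \<delta> has_integral (arctan (M / \<delta>) - arctan (-M / \<delta>))) {-M..M}"
    using has_integral_poisson_kernel[OF \<open>0 < \<delta>\<close>, of "-M" M] \<open>0 \<le> M\<close> by simp
  have "cmod (integral {-M..M} (\<lambda>s. F s * complex_of_real (poisson_kernel \<delta> s)))
      \<le> integral {-M..M} (\<lambda>s. C * poisson_kernel \<delta> s)"
  proof (rule integral_norm_bound_integral)
    show "(\<lambda>s. F s * complex_of_real (poisson_kernel \<delta> s)) integrable_on {-M..M}"
      by (intro integrable_continuous_interval continuous_intros continuous_on_subset[OF cF]
          continuous_on_subset[OF continuous_on_poisson_kernel[OF \<open>0 < \<delta>\<close>]]) auto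
    show "(\<lambda>s. C * poisson_kernel \<delta> s) integrable_on {-M..M}"
      by (rule integrable_on_mult_right[OF has_integral_integrable[OF P]])
    show "cmod (F s * complex_of_real (poisson_kernel \<delta> s)) \<le> C * poisson_kernel \<delta> s" for s
      using F[of s] poisson_kernel_nonneg[of \<delta> s] \<open>0 < \<delta>\<close> by (simp add: norm_mult mult_right_mono)
  qed
  also have "\<dots> = C * (arctan (M / \<delta>) - arctan (-M / \<delta>))"
    using integral_unique[OF P] by simp
  also have "\<dots> \<le> C * pi"
    using arctan_ubound[of "M / \<delta>"] arctan_lbound[of "-M / \<delta>"] order_trans[OF norm_ge_zero F]
    by (intro mult_left_mono) auto
  finally show ?thesis by (simp add: mult.commute)
qed

lemma abs_conj_poisson_kernel_le: "\<bar>conj_poisson_kernel \<delta> s\<bar> \<le> 1 / \<bar>s\<bar>"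
proof (cases "s = 0")
  case False
  have "\<bar>s\<bar> * \<bar>s\<bar> \<le> \<delta>\<^sup>2 + s\<^sup>2"
    by (simp add: power2_eq_square)
  moreover have "0 < \<delta>\<^sup>2 + s\<^sup>2"
    using False by (intro add_nonneg_pos) auto
  ultimately show ?thesis
    using False by (simp add: conj_poisson_kernel_def abs_div divide_simps)
qed (simp add: conj_poisson_kernel_def)

lemma conj_poisson_kernel_minus: "conj_poisson_kernel \<delta> (-s) = - conj_poisson_kernel \<delta> s"
  by (simp add: conj_poisson_kernel_def)

lemma integral_inverse_sq_le:
  fixes R M :: real
  assumes "0 < R" "R \<le> M"
  shows "integral {R..M} (\<lambda>s. (1 / s)\<^sup>2) \<le> 1 / R"
proof -
  have "((\<lambda>s. (1 / s)\<^sup>2) has_integral (- 1 / M - (- 1 / R))) {R..M}"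
  proof (rule fundamental_theorem_of_calculus)
    fix x assume "x \<in> {R..M}"
    then have "((\<lambda>x. - 1 / x) has_real_derivative (1 / x)\<^sup>2) (at x)"
      using \<open>0 < R\<close> by (auto intro!: derivative_eq_intros simp: power2_eq_square field_simps)
    then show "((\<lambda>x. - 1 / x) has_vector_derivative (1 / x)\<^sup>2) (at x within {R..M})"
      by (simp add: has_real_derivative_iff_has_vector_derivative has_vector_derivative_at_within)
  qed (use \<open>R \<le> M\<close> in simp)
  then show ?thesis
    using assms by (simp add: integral_unique)
qed

lemma integral_norm_mult_inverse_le:
  fixes G :: "real \<Rightarrow> complex"
  assumes cG: "continuous_on {R..M} G" and "0 < R" "R \<le> M"
  shows "integral {R..M} (\<lambda>s. cmod (G s) * (1 / s)) \<le> sqrt (integral {R..M} (\<lambda>s. (cmod (G s))\<^sup>2)) / sqrt R"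
proof -
  have cinv: "continuous_on {R..M} (\<lambda>s. 1 / s)"
    using \<open>0 < R\<close> by (intro continuous_intros) auto
  have "integral {R..M} (\<lambda>s. cmod (G s) * (1 / s))
      \<le> sqrt (integral {R..M} (\<lambda>s. (cmod (G s))\<^sup>2)) * sqrt (integral {R..M} (\<lambda>s. (1 / s)\<^sup>2))"
    by (intro Cauchy_Schwarz_integral_on integrable_continuous_interval continuous_intros cG cinv)
  also have "\<dots> \<le> sqrt (integral {R..M} (\<lambda>s. (cmod (G s))\<^sup>2)) * (1 / sqrt R)"
  proof (rule mult_left_mono)
    show "sqrt (integral {R..M} (\<lambda>s. (1 / s)\<^sup>2)) \<le> 1 / sqrt R"
      using real_sqrt_le_mono[OF integral_inverse_sq_le[OF assms(2,3)]] by (simp add: real_sqrt_divide)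
    show "0 \<le> sqrt (integral {R..M} (\<lambda>s. (cmod (G s))\<^sup>2))"
      by (intro real_sqrt_ge_zero integral_nonneg integrable_continuous_interval continuous_intros cG) auto
  qed
  finally show ?thesis by simp
qed

lemma norm_integral_conj_poisson_kernel_tail_le:
  fixes H G :: "real \<Rightarrow> complex"
  assumes cH: "continuous_on {R..M} H" and cG: "continuous_on {R..M} G"
    and SH: "\<And>s. cmod (H s) \<le> SH" and "0 < \<delta>" "0 < R" "R \<le> M"
  shows "cmod (integral {R..M} (\<lambda>s. cnj (H s) * G s * complex_of_real (conj_poisson_kernel \<delta> s)))
    \<le> SH * sqrt (integral {R..M} (\<lambda>s. (cmod (G s))\<^sup>2)) / sqrt R"
proof -
  have cK: "continuous_on {R..M} (conj_poisson_kernel \<delta>)"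
    by (rule continuous_on_subset[OF continuous_on_conj_poisson_kernel[OF \<open>0 < \<delta>\<close>]]) auto
  have SH0: "0 \<le> SH" using order_trans[OF norm_ge_zero SH] .
  have "cmod (integral {R..M} (\<lambda>s. cnj (H s) * G s * complex_of_real (conj_poisson_kernel \<delta> s)))
      \<le> integral {R..M} (\<lambda>s. SH * (cmod (G s) * (1 / s)))"
  proof (rule integral_norm_bound_integral)
    show "(\<lambda>s. cnj (H s) * G s * complex_of_real (conj_poisson_kernel \<delta> s)) integrable_on {R..M}"
      by (intro integrable_continuous_interval continuous_intros cH cG cK)
    show "(\<lambda>s. SH * (cmod (G s) * (1 / s))) integrable_on {R..M}"
      using \<open>0 < R\<close> by (intro integrable_continuous_interval continuous_intros cG) auto
    fix s assume "s \<in> {R..M}"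
    then have "\<bar>conj_poisson_kernel \<delta> s\<bar> \<le> 1 / s"
      using abs_conj_poisson_kernel_le[of \<delta> s] \<open>0 < R\<close> by simp
    then show "cmod (cnj (H s) * G s * complex_of_real (conj_poisson_kernel \<delta> s)) \<le> SH * (cmod (G s) * (1 / s))"
      unfolding norm_mult complex_mod_cnj norm_of_real mult.assoc
      by (intro mult_mono[OF SH mult_left_mono]) (use SH0 in auto)
  qed
  also have "\<dots> = SH * integral {R..M} (\<lambda>s. cmod (G s) * (1 / s))"
    by (rule Henstock_Kurzweil_Integration.integral_mult_right)
  also have "\<dots> \<le> SH * (sqrt (integral {R..M} (\<lambda>s. (cmod (G s))\<^sup>2)) / sqrt R)"
    by (intro mult_left_mono[OF _ SH0] integral_norm_mult_inverse_le cG assms)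
  finally show ?thesis by simp
qed

lemma norm_integral_conj_poisson_kernel_tails_le:
  fixes H G :: "real \<Rightarrow> complex"
  assumes cH: "continuous_on UNIV H" and cG: "continuous_on UNIV G" and vG: "\<And>s. M \<le> \<bar>s\<bar> \<Longrightarrow> G s = 0"
    and SH: "\<And>s. cmod (H s) \<le> SH" and "0 < \<delta>" "0 < R" "R \<le> M"
  defines "\<Phi> \<equiv> \<lambda>s. cnj (H s) * G s * complex_of_real (conj_poisson_kernel \<delta> s)"
  shows "cmod (integral {R..M} \<Phi>) \<le> SH * L2norm G / sqrt R"
    and "cmod (integral {-M..-R} \<Phi>) \<le> SH * L2norm G / sqrt R"
proof -
  have SH0: "0 \<le> SH" using order_trans[OF norm_ge_zero SH] .
  have L2: "SH * sqrt (integral {a..b} (\<lambda>s. (cmod (G s))\<^sup>2)) / sqrt R \<le> SH * L2norm G / sqrt R" for a b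
    using sqrt_integral_interval_le_L2norm[where M=M, OF cG vG] SH0 \<open>0 < R\<close>
    by (intro divide_right_mono mult_left_mono) auto
  have "cmod (integral {R..M} \<Phi>) \<le> SH * sqrt (integral {R..M} (\<lambda>s. (cmod (G s))\<^sup>2)) / sqrt R"
    unfolding \<Phi>_def using assms
    by (intro norm_integral_conj_poisson_kernel_tail_le continuous_on_subset[OF cH] continuous_on_subset[OF cG]) auto
  then show "cmod (integral {R..M} \<Phi>) \<le> SH * L2norm G / sqrt R"
    using L2 by (rule order_trans)
  \<comment> \<open>reflect the left tail onto the right one; the oddness of the kernel only changes the sign\<close>
  have "integral {-M..-R} \<Phi> = integral {R..M} (\<lambda>s. \<Phi> (-s))"
    using Henstock_Kurzweil_Integration.integral_reflect_real[of M R "\<lambda>s. \<Phi> (-s)"] by simp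
  also have "(\<lambda>s. \<Phi> (-s)) = (\<lambda>s. - (cnj (H (-s)) * G (-s) * complex_of_real (conj_poisson_kernel \<delta> s)))"
    by (simp add: \<Phi>_def conj_poisson_kernel_minus)
  finally have "cmod (integral {-M..-R} \<Phi>)
      = cmod (integral {R..M} (\<lambda>s. cnj (H (-s)) * G (-s) * complex_of_real (conj_poisson_kernel \<delta> s)))"
    by (simp only: Henstock_Kurzweil_Integration.integral_neg norm_minus_cancel)
  also have "\<dots> \<le> SH * sqrt (integral {R..M} (\<lambda>s. (cmod (G (-s)))\<^sup>2)) / sqrt R"
    using assms
    by (intro norm_integral_conj_poisson_kernel_tail_le continuous_on_compose2[OF cH]
        continuous_on_compose2[OF cG] continuous_intros) auto
  also have "integral {R..M} (\<lambda>s. (cmod (G (-s)))\<^sup>2) = integral {-M..-R} (\<lambda>s. (cmod (G s))\<^sup>2)"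
    using Henstock_Kurzweil_Integration.integral_reflect_real[of M R "\<lambda>s. (cmod (G (-s)))\<^sup>2"] by simp
  finally show "cmod (integral {-M..-R} \<Phi>) \<le> SH * L2norm G / sqrt R"
    using L2 by (rule order_trans)
qed

lemma norm_conj_mult_odd_part_le:
  fixes H G H' G' :: "real \<Rightarrow> complex"
  assumes H: "\<And>s. (H has_vector_derivative H' s) (at s)" and G: "\<And>s. (G has_vector_derivative G' s) (at s)"
    and cH': "continuous_on UNIV H'" and cG': "continuous_on UNIV G'"
    and vH': "\<And>s. M \<le> \<bar>s\<bar> \<Longrightarrow> H' s = 0" and vG': "\<And>s. M \<le> \<bar>s\<bar> \<Longrightarrow> G' s = 0"
    and SH: "\<And>s. cmod (H s) \<le> SH" and SG: "\<And>s. cmod (G s) \<le> SG" and "0 \<le> x"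
  shows "cmod (cnj (H x) * G x - cnj (H (-x)) * G (-x)) \<le> sqrt (2 * x) * (SH * L2norm G' + SG * L2norm H')"
proof -
  have SH0: "0 \<le> SH" using order_trans[OF norm_ge_zero SH] .
  have dG: "cmod (G x - G (-x)) \<le> sqrt (2 * x) * L2norm G'"
    using norm_diff_reflect_le[where M=M and x=x, OF G cG' vG'] \<open>0 \<le> x\<close> by simp
  have dH: "cmod (H x - H (-x)) \<le> sqrt (2 * x) * L2norm H'"
    using norm_diff_reflect_le[where M=M and x=x, OF H cH' vH'] \<open>0 \<le> x\<close> by simp
  have "cmod (cnj (H x) * G x - cnj (H (-x)) * G (-x))
      = cmod (cnj (H x) * (G x - G (-x)) + cnj (H x - H (-x)) * G (-x))"
    by (simp add: algebra_simps)
  also have "\<dots> \<le> cmod (H x) * cmod (G x - G (-x)) + cmod (H x - H (-x)) * cmod (G (-x))"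
    by (rule order_trans[OF norm_triangle_ineq]) (simp add: norm_mult del: complex_cnj_diff)
  also have "\<dots> \<le> SH * (sqrt (2 * x) * L2norm G') + sqrt (2 * x) * L2norm H' * SG"
    using \<open>0 \<le> x\<close> by (intro add_mono mult_mono SH SG dG dH) (auto simp: SH0 L2norm_nonneg)
  finally show ?thesis by (simp add: algebra_simps)
qed

lemma norm_integral_conj_poisson_kernel_core_le:
  fixes H G H' G' :: "real \<Rightarrow> complex"
  assumes H: "\<And>s. (H has_vector_derivative H' s) (at s)" and G: "\<And>s. (G has_vector_derivative G' s) (at s)"
    and cH': "continuous_on UNIV H'" and cG': "continuous_on UNIV G'"
    and vH': "\<And>s. M \<le> \<bar>s\<bar> \<Longrightarrow> H' s = 0" and vG': "\<And>s. M \<le> \<bar>s\<bar> \<Longrightarrow> G' s = 0"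
    and SH: "\<And>s. cmod (H s) \<le> SH" and SG: "\<And>s. cmod (G s) \<le> SG" and "0 < \<delta>" "0 \<le> R"
  shows "cmod (integral {-R..R} (\<lambda>s. cnj (H s) * G s * complex_of_real (conj_poisson_kernel \<delta> s)))
    \<le> 3 * sqrt R * (SH * L2norm G' + SG * L2norm H')"
proof -
  let ?C = "SH * L2norm G' + SG * L2norm H'"
  have C0: "0 \<le> ?C"
    using order_trans[OF norm_ge_zero SH] order_trans[OF norm_ge_zero SG] by (simp add: L2norm_nonneg)
  have "cmod (integral {-R..R} (\<lambda>s. cnj (H s) * G s * complex_of_real (conj_poisson_kernel \<delta> s)))
      \<le> 2 * (sqrt 2 * ?C) * sqrt R"
  proof (rule norm_integral_symmetric_le)
    have cH: "continuous_on UNIV H" and cG: "continuous_on UNIV G"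
      using H G by (auto intro!: continuous_at_imp_continuous_on has_vector_derivative_continuous)
    show "continuous_on {-R..R} (\<lambda>s. cnj (H s) * G s * complex_of_real (conj_poisson_kernel \<delta> s))"
      by (intro continuous_intros continuous_on_subset[OF cH] continuous_on_subset[OF cG]
          continuous_on_subset[OF continuous_on_conj_poisson_kernel[OF \<open>0 < \<delta>\<close>]]) auto
    fix x assume x: "x \<in> {0..R}"
    \<comment> \<open>the kernel is odd, so only the odd part of conj H * G contributes\<close>
    have "cnj (H x) * G x * complex_of_real (conj_poisson_kernel \<delta> x)
          + cnj (H (-x)) * G (-x) * complex_of_real (conj_poisson_kernel \<delta> (-x))
        = (cnj (H x) * G x - cnj (H (-x)) * G (-x)) * complex_of_real (conj_poisson_kernel \<delta> x)"
      by (simp add: conj_poisson_kernel_minus algebra_simps)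
    moreover have "cmod (cnj (H x) * G x - cnj (H (-x)) * G (-x)) * \<bar>conj_poisson_kernel \<delta> x\<bar>
        \<le> sqrt 2 * ?C * x powr (-1/2)"
    proof (cases "x = 0")
      case False
      with x have "0 < x" by simp
      have "cmod (cnj (H x) * G x - cnj (H (-x)) * G (-x)) * \<bar>conj_poisson_kernel \<delta> x\<bar>
          \<le> (sqrt (2 * x) * ?C) * (1 / x)"
        using abs_conj_poisson_kernel_le[of \<delta> x] \<open>0 < x\<close> C0
        by (intro mult_mono norm_conj_mult_odd_part_le[where M=M, OF H G cH' cG' vH' vG' SH SG]) auto
      also have "\<dots> = sqrt 2 * ?C * x powr (-1/2)"
      proof -
        have "sqrt (2 * x) * (1 / x) = sqrt 2 / sqrt x"
          using \<open>0 < x\<close> by (simp add: real_sqrt_mult field_simps)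
        moreover have "x powr (-1/2) = 1 / sqrt x"
          using \<open>0 < x\<close> by (simp add: powr_minus_divide powr_half_sqrt[symmetric])
        ultimately show ?thesis
          by (metis (no_types, opaque_lifting) mult.assoc mult.commute times_divide_eq_right mult_1_right)
      qed
      finally show ?thesis .
    qed (simp add: conj_poisson_kernel_def)
    ultimately show "cmod (cnj (H x) * G x * complex_of_real (conj_poisson_kernel \<delta> x)
        + cnj (H (-x)) * G (-x) * complex_of_real (conj_poisson_kernel \<delta> (-x)))
      \<le> sqrt 2 * ?C * x powr (-1/2)"
      by (simp add: norm_mult)
  qed (use \<open>0 \<le> R\<close> C0 in auto)
  also have "\<dots> = (2 * sqrt 2) * (sqrt R * ?C)"
    by (simp add: algebra_simps)
  also have "\<dots> \<le> 3 * (sqrt R * ?C)"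
  proof (rule mult_right_mono)
    show "2 * sqrt 2 \<le> (3::real)"
      by (rule power2_le_imp_le) (auto simp: power_mult_distrib)
  qed (use \<open>0 \<le> R\<close> C0 in simp)
  finally show ?thesis by (simp add: algebra_simps)
qed

lemma norm_integral_conj_poisson_kernel_le:
  fixes H G H' G' :: "real \<Rightarrow> complex"
  assumes H: "\<And>s. (H has_vector_derivative H' s) (at s)" and G: "\<And>s. (G has_vector_derivative G' s) (at s)"
    and cH': "continuous_on UNIV H'" and cG': "continuous_on UNIV G'"
    and vG: "\<And>s. M \<le> \<bar>s\<bar> \<Longrightarrow> G s = 0"
    and vH': "\<And>s. M \<le> \<bar>s\<bar> \<Longrightarrow> H' s = 0" and vG': "\<And>s. M \<le> \<bar>s\<bar> \<Longrightarrow> G' s = 0"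
    and SH: "\<And>s. cmod (H s) \<le> SH" and SG: "\<And>s. cmod (G s) \<le> SG"
    and "0 < \<delta>" "0 < \<rho>" "\<rho>\<^sup>2 \<le> M"
  shows "cmod (integral {-M..M} (\<lambda>s. cnj (H s) * G s * complex_of_real (conj_poisson_kernel \<delta> s)))
    \<le> 2 * SH * L2norm G / \<rho> + 3 * \<rho> * (SH * L2norm G' + SG * L2norm H')"
proof -
  define R where "R = \<rho>\<^sup>2"
  have "0 < R" "R \<le> M" and sqrt_R: "sqrt R = \<rho>"
    using \<open>0 < \<rho>\<close> \<open>\<rho>\<^sup>2 \<le> M\<close> by (auto simp: R_def)
  define \<Phi> where "\<Phi> = (\<lambda>s. cnj (H s) * G s * complex_of_real (conj_poisson_kernel \<delta> s))"
  have cH: "continuous_on UNIV H" and cG: "continuous_on UNIV G"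
    using H G by (auto intro!: continuous_at_imp_continuous_on has_vector_derivative_continuous)
  have "\<Phi> integrable_on {a..b}" for a b
    unfolding \<Phi>_def
    by (intro integrable_continuous_interval continuous_intros continuous_on_subset[OF cH]
        continuous_on_subset[OF cG] continuous_on_subset[OF continuous_on_conj_poisson_kernel[OF \<open>0 < \<delta>\<close>]]) auto
  then have "integral {-M..M} \<Phi> = integral {-M..-R} \<Phi> + (integral {-R..R} \<Phi> + integral {R..M} \<Phi>)"
    using \<open>0 < R\<close> \<open>R \<le> M\<close> by (simp add: Henstock_Kurzweil_Integration.integral_combine)
  then have "cmod (integral {-M..M} \<Phi>)
      \<le> cmod (integral {-M..-R} \<Phi>) + cmod (integral {-R..R} \<Phi>) + cmod (integral {R..M} \<Phi>)"
    by (metis add.assoc norm_triangle_ineq order_trans add_left_mono)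
  moreover note norm_integral_conj_poisson_kernel_tails_le[OF cH cG vG SH \<open>0 < \<delta>\<close> \<open>0 < R\<close> \<open>R \<le> M\<close>, folded \<Phi>_def]
  moreover have "cmod (integral {-R..R} \<Phi>) \<le> 3 * sqrt R * (SH * L2norm G' + SG * L2norm H')"
    unfolding \<Phi>_def using \<open>0 < \<delta>\<close> \<open>0 < R\<close>
    by (intro norm_integral_conj_poisson_kernel_core_le[where M=M, OF H G cH' cG' vH' vG' SH SG]) auto
  ultimately show ?thesis
    unfolding \<Phi>_def[symmetric] sqrt_R by simp
qed

section \<open>The resolvent along a line\<close>

lemma integral_divide_resolvent_eq:
  fixes F :: "real \<Rightarrow> complex"
  assumes cF: "continuous_on UNIV F" and vF: "\<And>s. N \<le> \<bar>s\<bar> \<Longrightarrow> F s = 0" and "0 < \<delta>"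
  shows "(\<integral>s. F s / (complex_of_real \<delta> + \<i> * complex_of_real s) \<partial>lborel)
    = integral {-N..N} (\<lambda>s. F s * complex_of_real (poisson_kernel \<delta> s))
      - \<i> * integral {-N..N} (\<lambda>s. F s * complex_of_real (conj_poisson_kernel \<delta> s))"
proof -
  have cP: "continuous_on UNIV (poisson_kernel \<delta>)" and cK: "continuous_on UNIV (conj_poisson_kernel \<delta>)"
    using \<open>0 < \<delta>\<close> by (simp_all add: continuous_on_poisson_kernel continuous_on_conj_poisson_kernel)
  define Q where "Q s = F s * complex_of_real (poisson_kernel \<delta> s)
    - \<i> * (F s * complex_of_real (conj_poisson_kernel \<delta> s))" for s
  have cQ: "continuous_on UNIV Q" unfolding Q_def by (intro continuous_intros cF cP cK)
  have vQ: "Q s = 0" if "N \<le> \<bar>s\<bar>" for s using vF[OF that] by (simp add: Q_def)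
  have "(\<integral>s. F s / (complex_of_real \<delta> + \<i> * complex_of_real s) \<partial>lborel) = integral {-N..N} Q"
    unfolding divide_resolvent_eq[OF \<open>0 < \<delta>\<close>] Q_def[symmetric]
    using integral_vanishing_outside_interval(2,4)[where M=N, OF cQ vQ] by simp
  also have "\<dots> = integral {-N..N} (\<lambda>s. F s * complex_of_real (poisson_kernel \<delta> s))
      - \<i> * integral {-N..N} (\<lambda>s. F s * complex_of_real (conj_poisson_kernel \<delta> s))"
  proof -
    have "(\<lambda>s. F s * complex_of_real (poisson_kernel \<delta> s)) integrable_on {-N..N}"
      "(\<lambda>s. F s * complex_of_real (conj_poisson_kernel \<delta> s)) integrable_on {-N..N}"
      by (auto intro!: integrable_continuous_interval continuous_intros continuous_on_subset[OF cF]
          continuous_on_subset[OF cP] continuous_on_subset[OF cK])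
    then show ?thesis
      unfolding Q_def by (simp add: Henstock_Kurzweil_Integration.integral_diff)
  qed
  finally show ?thesis .
qed

lemma norm_integral_resolvent_le:
  fixes H G H' G' :: "real \<Rightarrow> complex"
  assumes H: "\<And>s. (H has_vector_derivative H' s) (at s)" and G: "\<And>s. (G has_vector_derivative G' s) (at s)"
    and cH': "continuous_on UNIV H'" and cG': "continuous_on UNIV G'"
    and vH: "\<And>s. M \<le> \<bar>s\<bar> \<Longrightarrow> H s = 0" and vG: "\<And>s. M \<le> \<bar>s\<bar> \<Longrightarrow> G s = 0"
    and vH': "\<And>s. M \<le> \<bar>s\<bar> \<Longrightarrow> H' s = 0" and vG': "\<And>s. M \<le> \<bar>s\<bar> \<Longrightarrow> G' s = 0"
    and SH: "\<And>s. cmod (H s) \<le> SH" and SG: "\<And>s. cmod (G s) \<le> SG"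
    and "0 < \<delta>" "0 < \<rho>"
  shows "cmod (\<integral>s. cnj (H s) * G s / (complex_of_real \<delta> + \<i> * complex_of_real s) \<partial>lborel)
    \<le> 4 * SH * SG + 2 * SH * L2norm G / \<rho> + 3 * \<rho> * (SH * L2norm G' + SG * L2norm H')"
proof -
  define N where "N = max M (\<rho>\<^sup>2)"
  have "\<rho>\<^sup>2 \<le> N" by (simp add: N_def)
  then have "0 \<le> N" by (meson order_trans zero_le_power2)
  have vanish: "H s = 0" "G s = 0" "H' s = 0" "G' s = 0" if "N \<le> \<bar>s\<bar>" for s
    using that vH vG vH' vG' by (auto simp: N_def)
  have cH: "continuous_on UNIV H" and cG: "continuous_on UNIV G"
    using H G by (auto intro!: continuous_at_imp_continuous_on has_vector_derivative_continuous)
  let ?P = "integral {-N..N} (\<lambda>s. cnj (H s) * G s * complex_of_real (poisson_kernel \<delta> s))"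
  let ?K = "integral {-N..N} (\<lambda>s. cnj (H s) * G s * complex_of_real (conj_poisson_kernel \<delta> s))"
  have "cmod (\<integral>s. cnj (H s) * G s / (complex_of_real \<delta> + \<i> * complex_of_real s) \<partial>lborel) = cmod (?P - \<i> * ?K)"
    using integral_divide_resolvent_eq[of "\<lambda>s. cnj (H s) * G s" N, OF _ _ \<open>0 < \<delta>\<close>] vanish
    by (simp add: continuous_intros cH cG)
  also have "\<dots> \<le> cmod ?P + cmod ?K"
    using norm_triangle_ineq4[of ?P "\<i> * ?K"] by (simp add: norm_mult)
  also have "cmod ?P \<le> pi * (SH * SG)"
    using \<open>0 < \<delta>\<close> \<open>0 \<le> N\<close>
    by (intro norm_integral_mult_poisson_kernel_le continuous_intros cH cG)
       (auto simp: norm_mult intro: mult_mono SH SG order_trans[OF norm_ge_zero SH])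
  also have "\<dots> \<le> 4 * (SH * SG)"
    using pi_less_4 order_trans[OF norm_ge_zero SH] order_trans[OF norm_ge_zero SG]
    by (intro mult_right_mono) auto
  also have "cmod ?K \<le> 2 * SH * L2norm G / \<rho> + 3 * \<rho> * (SH * L2norm G' + SG * L2norm H')"
    by (rule norm_integral_conj_poisson_kernel_le[where M=N, OF H G cH' cG' _ _ _ SH SG])
       (use vanish \<open>0 < \<delta>\<close> \<open>0 < \<rho>\<close> \<open>\<rho>\<^sup>2 \<le> N\<close> in auto)
  finally show ?thesis by simp
qed

lemma norm_integral_resolvent_le_energy:
  fixes H G H' G' :: "real \<Rightarrow> complex"
  assumes H: "\<And>s. (H has_vector_derivative H' s) (at s)" and G: "\<And>s. (G has_vector_derivative G' s) (at s)"
    and cH': "continuous_on UNIV H'" and cG': "continuous_on UNIV G'"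
    and vH: "\<And>s. M \<le> \<bar>s\<bar> \<Longrightarrow> H s = 0" and vG: "\<And>s. M \<le> \<bar>s\<bar> \<Longrightarrow> G s = 0"
    and vH': "\<And>s. M \<le> \<bar>s\<bar> \<Longrightarrow> H' s = 0" and vG': "\<And>s. M \<le> \<bar>s\<bar> \<Longrightarrow> G' s = 0"
    and "0 < \<delta>" "0 < \<rho>"
  defines "EH \<equiv> \<integral>x. cmod (H x) * cmod (H' x) \<partial>lborel" and "EG \<equiv> \<integral>x. cmod (G x) * cmod (G' x) \<partial>lborel"
  shows "cmod (\<integral>s. cnj (H s) * G s / (complex_of_real \<delta> + \<i> * complex_of_real s) \<partial>lborel)
    \<le> 8 * sqrt EH * sqrt EG + 2 * sqrt 2 / \<rho> * sqrt EH * L2norm G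
      + 3 * sqrt 2 * \<rho> * (sqrt EH * L2norm G' + sqrt EG * L2norm H')"
proof -
  have SH: "cmod (H s) \<le> sqrt 2 * sqrt EH" for s
    using norm_sq_le_integral_norm_mult_deriv[where M=M, OF H cH' vH]
    by (simp add: EH_def real_le_rsqrt real_sqrt_mult[symmetric])
  have SG: "cmod (G s) \<le> sqrt 2 * sqrt EG" for s
    using norm_sq_le_integral_norm_mult_deriv[where M=M, OF G cG' vG]
    by (simp add: EG_def real_le_rsqrt real_sqrt_mult[symmetric])
  have "cmod (\<integral>s. cnj (H s) * G s / (complex_of_real \<delta> + \<i> * complex_of_real s) \<partial>lborel)
    \<le> 4 * (sqrt 2 * sqrt EH) * (sqrt 2 * sqrt EG) + 2 * (sqrt 2 * sqrt EH) * L2norm G / \<rho>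
      + 3 * \<rho> * ((sqrt 2 * sqrt EH) * L2norm G' + (sqrt 2 * sqrt EG) * L2norm H')"
    by (rule norm_integral_resolvent_le[where M=M, OF H G cH' cG' vH vG vH' vG' SH SG \<open>0 < \<delta>\<close> \<open>0 < \<rho>\<close>])
  moreover have "sqrt 2 * (sqrt 2 * x) = 2 * x" for x :: real
    by (simp add: mult.assoc[symmetric])
  ultimately show ?thesis by (simp add: algebra_simps)
qed

lemma Cc_inf_imp_Ck_1: "Cc_inf f \<Longrightarrow> Ck 1 f"
  by (simp add: Cc_inf_def smooth_def)

lemma Ck_1D:
  assumes "Ck 1 f"
  shows "f differentiable (at v)" and "continuous_on UNIV f"
    and "b \<in> Basis \<Longrightarrow> continuous_on UNIV (partial_deriv f b)"
proof -
  have C1: "Ck (Suc 0) f" using assms by (simp add: One_nat_def)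
  then show diff: "f differentiable (at v)" for v by simp
  show "continuous_on UNIV f"
    using diff by (intro continuous_at_imp_continuous_on differentiable_imp_continuous_within ballI)
  show "b \<in> Basis \<Longrightarrow> continuous_on UNIV (partial_deriv f b)"
    using C1 by simp
qed

lemma vanishes_outside_ball_if_compact_support:
  fixes f :: "'a::euclidean_space \<Rightarrow> complex"
  assumes "compact (closure {v. f v \<noteq> 0})"
  obtains B where "\<And>v. B \<le> norm v \<Longrightarrow> f v = 0"
    and "\<And>v. B \<le> norm v \<Longrightarrow> frechet_derivative f (at v) = (\<lambda>_. 0)"
proof -
  let ?S = "closure {v. f v \<noteq> 0}"
  obtain B where B: "\<And>v. v \<in> ?S \<Longrightarrow> norm v \<le> B"
    using compact_imp_bounded[OF assms] by (auto simp: bounded_iff)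
  have outside: "v \<in> - ?S" if "B + 1 \<le> norm v" for v
    using B[of v] that by auto
  have zero: "f v = 0" if "v \<in> - ?S" for v
    using that closure_subset[of "{v. f v \<noteq> 0}"] by auto
  have deriv: "(f has_derivative (\<lambda>_. 0)) (at v)" if "B + 1 \<le> norm v" for v
  proof (rule has_derivative_transform_within_open[OF has_derivative_const])
    show "open (- ?S)" "v \<in> - ?S" using outside[OF that] by auto
    show "0 = f x" if "x \<in> - ?S" for x using zero[OF that] by simp
  qed
  show ?thesis
  proof (rule that)
    show "f v = 0" if "B + 1 \<le> norm v" for v
      using zero[OF outside[OF that]] .
    show "frechet_derivative f (at v) = (\<lambda>_. 0)" if "B + 1 \<le> norm v" for v
      using frechet_derivative_at[OF deriv[OF that]] by simp
  qed
qed

definition dir_deriv :: "('a::euclidean_space \<Rightarrow> complex) \<Rightarrow> 'a \<Rightarrow> 'a \<Rightarrow> complex" where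
  "dir_deriv f u v = frechet_derivative f (at v) u"

lemma dir_deriv_eq_sum_partial_deriv:
  assumes "f differentiable (at v)"
  shows "dir_deriv f u v = (\<Sum>b\<in>Basis. (u \<bullet> b) *\<^sub>R partial_deriv f b v)"
proof -
  have "linear (frechet_derivative f (at v))"
    using assms by (intro has_derivative_linear) (simp add: frechet_derivative_works)
  then have "frechet_derivative f (at v) (\<Sum>b\<in>Basis. (u \<bullet> b) *\<^sub>R b)
      = (\<Sum>b\<in>Basis. (u \<bullet> b) *\<^sub>R frechet_derivative f (at v) b)"
    by (simp add: linear_sum linear_scale)
  then show ?thesis
    by (simp add: dir_deriv_def partial_deriv_def euclidean_representation)
qed

lemma continuous_on_dir_deriv:
  assumes "Ck 1 f"
  shows "continuous_on UNIV (dir_deriv f u)"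
proof -
  have "dir_deriv f u = (\<lambda>v. \<Sum>b\<in>Basis. (u \<bullet> b) *\<^sub>R partial_deriv f b v)"
    using Ck_1D(1)[OF assms] by (simp add: fun_eq_iff dir_deriv_eq_sum_partial_deriv)
  then show ?thesis
    using Ck_1D(3)[OF assms] by (simp add: continuous_intros)
qed

lemma norm_dir_deriv_sq_le:
  assumes "f differentiable (at v)" and "norm u = 1"
  shows "(cmod (dir_deriv f u v))\<^sup>2 \<le> (\<Sum>b\<in>Basis. (cmod (partial_deriv f b v))\<^sup>2)"
proof -
  have "cmod (dir_deriv f u v) \<le> (\<Sum>b\<in>Basis. \<bar>u \<bullet> b\<bar> * cmod (partial_deriv f b v))"
    unfolding dir_deriv_eq_sum_partial_deriv[OF assms(1)] by (rule order_trans[OF norm_sum]) simp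
  then have "(cmod (dir_deriv f u v))\<^sup>2 \<le> (\<Sum>b\<in>Basis. \<bar>u \<bullet> b\<bar> * cmod (partial_deriv f b v))\<^sup>2"
    by (intro power_mono) auto
  also have "\<dots> \<le> (\<Sum>b\<in>Basis. \<bar>u \<bullet> b\<bar>\<^sup>2) * (\<Sum>b\<in>Basis. (cmod (partial_deriv f b v))\<^sup>2)"
    by (rule Cauchy_Schwarz_ineq_sum)
  also have "(\<Sum>b\<in>Basis. \<bar>u \<bullet> b\<bar>\<^sup>2) = 1"
    using assms(2) by (simp add: power2_eq_square euclidean_inner[of u u, symmetric] norm_eq_1)
  finally show ?thesis by simp
qed

lemma has_vector_derivative_along_line:
  assumes "f differentiable (at (p + s *\<^sub>R u))"
  shows "((\<lambda>s. f (p + s *\<^sub>R u)) has_vector_derivative dir_deriv f u (p + s *\<^sub>R u)) (at s)"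
proof -
  let ?D = "frechet_derivative f (at (p + s *\<^sub>R u))"
  have f: "(f has_derivative ?D) (at (p + s *\<^sub>R u))"
    using assms by (simp add: frechet_derivative_works)
  have "((\<lambda>s. p + s *\<^sub>R u) has_derivative (\<lambda>s. s *\<^sub>R u)) (at s)"
    by (auto intro!: derivative_eq_intros)
  from has_derivative_compose[OF this f]
  have "((\<lambda>s. f (p + s *\<^sub>R u)) has_derivative (\<lambda>t. ?D (t *\<^sub>R u))) (at s)" .
  moreover have "(\<lambda>t. ?D (t *\<^sub>R u)) = (\<lambda>t. t *\<^sub>R dir_deriv f u (p + s *\<^sub>R u))"
    using linear_scale[OF has_derivative_linear[OF f]] by (simp add: dir_deriv_def)
  ultimately show ?thesis by (simp add: has_vector_derivative_def)
qed

lemma L2norm_dir_deriv_le_grad_L2norm: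
  assumes f: "Ck 1 f" "compact (closure {v. f v \<noteq> 0})" and "norm u = 1"
  shows "L2norm (dir_deriv f u) \<le> grad_L2norm f"
proof -
  obtain B where B: "\<And>v. B \<le> norm v \<Longrightarrow> frechet_derivative f (at v) = (\<lambda>_. 0)"
    using vanishes_outside_ball_if_compact_support[OF f(2)] by metis
  have "integrable lborel (\<lambda>v. (cmod (dir_deriv f u v))\<^sup>2)"
    by (rule integrable_lborel_vanishing_outside_ball[of _ B])
       (intro continuous_intros continuous_on_dir_deriv f(1), simp add: dir_deriv_def B)
  moreover have "integrable lborel (\<lambda>v. \<Sum>b\<in>Basis. (cmod (partial_deriv f b v))\<^sup>2)"
    by (rule integrable_lborel_vanishing_outside_ball[of _ B])
       (intro continuous_intros Ck_1D(3)[OF f(1)], simp_all add: partial_deriv_def B)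
  ultimately have "(\<integral>v. (cmod (dir_deriv f u v))\<^sup>2 \<partial>lborel) \<le> (\<integral>v. (\<Sum>b\<in>Basis. (cmod (partial_deriv f b v))\<^sup>2) \<partial>lborel)"
    using norm_dir_deriv_sq_le[OF Ck_1D(1)[OF f(1)] \<open>norm u = 1\<close>] by (rule integral_mono)
  then show ?thesis unfolding L2norm_def grad_L2norm_def by simp
qed

section \<open>Integration along parallel lines\<close>

lemma nn_integral_lborel_add:
  fixes G :: "'a::euclidean_space \<Rightarrow> ennreal"
  assumes [measurable]: "G \<in> borel_measurable borel"
  shows "(\<integral>\<^sup>+w. G w \<partial>lborel) = (\<integral>\<^sup>+v. G (c + v) \<partial>lborel)"
proof -
  have "(\<integral>\<^sup>+w. G w \<partial>lborel) = (\<integral>\<^sup>+w. G w \<partial>distr lborel borel ((+) c))"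
    by (simp add: lborel_distr_plus)
  also have "\<dots> = (\<integral>\<^sup>+v. G (c + v) \<partial>lborel)"
    by (rule nn_integral_distr) auto
  finally show ?thesis .
qed

lemma distr_shear_lborel:
  fixes u :: "'a::euclidean_space"
  defines "T \<equiv> \<lambda>(v, s::real). (v + s *\<^sub>R u, s)"
  shows "distr (lborel \<Otimes>\<^sub>M lborel) (lborel \<Otimes>\<^sub>M lborel) T = lborel \<Otimes>\<^sub>M lborel"
proof (rule measure_eqI)
  have T_meas[measurable]: "T \<in> (lborel \<Otimes>\<^sub>M lborel) \<rightarrow>\<^sub>M (lborel \<Otimes>\<^sub>M (lborel :: real measure))"
    unfolding T_def by measurable
  fix A assume A_distr: "A \<in> sets (distr (lborel \<Otimes>\<^sub>M lborel) (lborel \<Otimes>\<^sub>M lborel) T)"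
  then have A[measurable]: "A \<in> sets (lborel \<Otimes>\<^sub>M (lborel :: real measure))" by simp
  have "emeasure (distr (lborel \<Otimes>\<^sub>M lborel) (lborel \<Otimes>\<^sub>M lborel) T) A
      = (\<integral>\<^sup>+z. indicator A z \<partial>distr (lborel \<Otimes>\<^sub>M lborel) (lborel \<Otimes>\<^sub>M lborel) T)"
    by (rule nn_integral_indicator[OF A_distr, symmetric])
  also have "\<dots> = (\<integral>\<^sup>+z. indicator A (T z) \<partial>(lborel \<Otimes>\<^sub>M lborel))"
    by (rule nn_integral_distr) simp_all
  also have "\<dots> = (\<integral>\<^sup>+s. (\<integral>\<^sup>+v. indicator A (v + s *\<^sub>R u, s) \<partial>lborel) \<partial>lborel)"
    by (subst lborel_pair.nn_integral_snd[symmetric]) (simp_all add: T_def)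
  also have "\<dots> = (\<integral>\<^sup>+s. (\<integral>\<^sup>+w. indicator A (w, s) \<partial>lborel) \<partial>lborel)"
  proof -
    have "(\<integral>\<^sup>+v. indicator A (v + s *\<^sub>R u, s) \<partial>lborel) = (\<integral>\<^sup>+w. indicator A (w, s) \<partial>lborel)" for s :: real
      using nn_integral_lborel_add[of "\<lambda>w. indicator A (w, s)" "s *\<^sub>R u"] by (simp add: add.commute)
    then show ?thesis by simp
  qed
  also have "\<dots> = emeasure (lborel \<Otimes>\<^sub>M lborel) A"
    by (subst lborel_pair.nn_integral_snd) (simp_all add: nn_integral_indicator[OF A])
  finally show "emeasure (distr (lborel \<Otimes>\<^sub>M lborel) (lborel \<Otimes>\<^sub>M lborel) T) A = emeasure (lborel \<Otimes>\<^sub>M lborel) A" .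
qed simp

definition perp_proj :: "'a::real_inner \<Rightarrow> 'a \<Rightarrow> 'a" where
  "perp_proj u v = v - (u \<bullet> v) *\<^sub>R u"

lemma inner_perp_proj_add_scaleR:
  assumes "norm u = 1"
  shows "u \<bullet> (perp_proj u v + s *\<^sub>R u) = s"
  using assms by (simp add: perp_proj_def inner_diff_right inner_add_right norm_eq_1)

lemma integral_line_shift:
  fixes f :: "'a::euclidean_space \<Rightarrow> 'b::{banach, second_countable_topology}"
  shows "(\<integral>s. f (v + s *\<^sub>R u) \<partial>lborel) = (\<integral>s. f (perp_proj u v + s *\<^sub>R u) \<partial>lborel)"
  using lborel_integral_real_affine[of 1 "\<lambda>s. f (v + s *\<^sub>R u)" "- (u \<bullet> v)"]
  by (simp add: perp_proj_def algebra_simps)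

lemma integral_lborel_eq_slab_integral:
  fixes f :: "'a::euclidean_space \<Rightarrow> 'b::{banach, second_countable_topology}"
  assumes u: "norm u = 1" and f: "integrable lborel f"
  shows "integrable lborel (\<lambda>v. indicator {0..1} (u \<bullet> v) *\<^sub>R (\<integral>s. f (perp_proj u v + s *\<^sub>R u) \<partial>lborel))"
    and "(\<integral>v. f v \<partial>lborel)
      = (\<integral>v. indicator {0..1} (u \<bullet> v) *\<^sub>R (\<integral>s. f (perp_proj u v + s *\<^sub>R u) \<partial>lborel) \<partial>lborel)"
proof -
  have [measurable]: "f \<in> borel_measurable borel"
    using borel_measurable_integrable[OF f] by simp
  \<comment> \<open>spread each value f w over a window of unit length in an extra variable s, then shear\<close>
  define \<Phi> where "\<Phi> = (\<lambda>(w, s::real). indicator {0..1::real} (u \<bullet> w - s) *\<^sub>R f w)"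
  define T where "T = (\<lambda>(v::'a, s::real). (v + s *\<^sub>R u, s))"
  have [measurable]: "\<Phi> \<in> borel_measurable (lborel \<Otimes>\<^sub>M lborel)" unfolding \<Phi>_def by measurable
  have [measurable]: "T \<in> (lborel \<Otimes>\<^sub>M lborel) \<rightarrow>\<^sub>M (lborel \<Otimes>\<^sub>M lborel)" unfolding T_def by measurable
  have window: "indicator {0..1::real} (c - s) = indicator {c - 1..c} s" for c s
    by (auto simp: indicator_def)
  have "(\<integral>\<^sup>+z. norm (\<Phi> z) \<partial>(lborel \<Otimes>\<^sub>M lborel))
      = (\<integral>\<^sup>+w. (\<integral>\<^sup>+s. ennreal (norm (f w)) * indicator {0..1::real} (u \<bullet> w - s) \<partial>lborel) \<partial>lborel)"
    by (subst lborel.nn_integral_fst[symmetric]) (auto simp: \<Phi>_def indicator_def intro!: nn_integral_cong)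
  also have "\<dots> = (\<integral>\<^sup>+w. norm (f w) \<partial>lborel)"
    by (simp add: nn_integral_cmult window)
  finally have \<Phi>_int: "integrable (lborel \<Otimes>\<^sub>M lborel) \<Phi>"
    using f by (simp add: integrable_iff_bounded)
  have "(\<integral>v. f v \<partial>lborel) = (\<integral>w. (\<integral>s. \<Phi> (w, s) \<partial>lborel) \<partial>lborel)"
    by (simp add: \<Phi>_def window)
  also have "\<dots> = (\<integral>z. \<Phi> z \<partial>(lborel \<Otimes>\<^sub>M lborel))"
    by (rule lborel_pair.integral_fst'[OF \<Phi>_int])
  also have "\<dots> = (\<integral>z. \<Phi> (T z) \<partial>(lborel \<Otimes>\<^sub>M lborel))"
    by (subst (1) distr_shear_lborel[of u, folded T_def, symmetric]) (simp add: integral_distr)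
  finally have int_eq: "(\<integral>v. f v \<partial>lborel) = (\<integral>z. \<Phi> (T z) \<partial>(lborel \<Otimes>\<^sub>M lborel))" .
  have \<Phi>T_int: "integrable (lborel \<Otimes>\<^sub>M lborel) (\<lambda>z. \<Phi> (T z))"
    using \<Phi>_int by (subst (asm) distr_shear_lborel[of u, folded T_def, symmetric]) (simp add: integrable_distr_eq)
  have inner: "(\<integral>s. \<Phi> (T (v, s)) \<partial>lborel)
      = indicator {0..1} (u \<bullet> v) *\<^sub>R (\<integral>s. f (perp_proj u v + s *\<^sub>R u) \<partial>lborel)" for v
  proof -
    have "(\<integral>s. \<Phi> (T (v, s)) \<partial>lborel) = indicator {0..1} (u \<bullet> v) *\<^sub>R (\<integral>s. f (v + s *\<^sub>R u) \<partial>lborel)"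
      using u by (simp add: \<Phi>_def T_def inner_add_right norm_eq_1)
    then show ?thesis by (simp only: integral_line_shift[of f v u])
  qed
  show "integrable lborel (\<lambda>v. indicator {0..1} (u \<bullet> v) *\<^sub>R (\<integral>s. f (perp_proj u v + s *\<^sub>R u) \<partial>lborel))"
    using lborel_pair.integrable_fst'[OF \<Phi>T_int] by (simp add: inner)
  show "(\<integral>v. f v \<partial>lborel)
      = (\<integral>v. indicator {0..1} (u \<bullet> v) *\<^sub>R (\<integral>s. f (perp_proj u v + s *\<^sub>R u) \<partial>lborel) \<partial>lborel)"
    using lborel_pair.integral_fst'[OF \<Phi>T_int] by (simp add: int_eq inner)
qed

lemma norm_integral_le_slab_integral_norm:
  fixes f :: "'a::euclidean_space \<Rightarrow> 'b::{banach, second_countable_topology}"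
  assumes u: "norm u = 1" and f: "integrable lborel f"
  shows "integrable lborel (\<lambda>v. indicator {0..1} (u \<bullet> v) * norm (\<integral>s. f (perp_proj u v + s *\<^sub>R u) \<partial>lborel))"
    and "norm (\<integral>v. f v \<partial>lborel)
      \<le> (\<integral>v. indicator {0..1} (u \<bullet> v) * norm (\<integral>s. f (perp_proj u v + s *\<^sub>R u) \<partial>lborel) \<partial>lborel)"
proof -
  note slab = integral_lborel_eq_slab_integral[OF u f]
  show "integrable lborel (\<lambda>v. indicator {0..1} (u \<bullet> v) * norm (\<integral>s. f (perp_proj u v + s *\<^sub>R u) \<partial>lborel))"
    using integrable_norm[OF slab(1)] by simp
  show "norm (\<integral>v. f v \<partial>lborel)
      \<le> (\<integral>v. indicator {0..1} (u \<bullet> v) * norm (\<integral>s. f (perp_proj u v + s *\<^sub>R u) \<partial>lborel) \<partial>lborel)"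
    unfolding slab(2)
    using integral_norm_bound[of lborel "\<lambda>v. indicator {0..1} (u \<bullet> v) *\<^sub>R (\<integral>s. f (perp_proj u v + s *\<^sub>R u) \<partial>lborel)"]
    by simp
qed

lemma norm_line_ge:
  fixes p u :: "'a::real_normed_vector"
  assumes "norm u = 1" and "B + norm p \<le> \<bar>s\<bar>"
  shows "B \<le> norm (p + s *\<^sub>R u)"
proof -
  have "\<bar>s\<bar> = norm ((p + s *\<^sub>R u) - p)" using assms(1) by simp
  also have "\<dots> \<le> norm (p + s *\<^sub>R u) + norm p" by (rule norm_triangle_ineq4)
  finally show ?thesis using assms(2) by simp
qed

definition slab_line_root :: "'a::euclidean_space \<Rightarrow> ('a \<Rightarrow> real) \<Rightarrow> 'a \<Rightarrow> real" where
  "slab_line_root u x v = indicator {0..1} (u \<bullet> v) * sqrt (\<integral>s. x (perp_proj u v + s *\<^sub>R u) \<partial>lborel)"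

lemma borel_measurable_slab_line_root:
  assumes "continuous_on UNIV x"
  shows "slab_line_root u x \<in> borel_measurable lborel"
proof -
  have [measurable]: "x \<in> borel_measurable borel" by (rule borel_measurable_continuous_onI[OF assms])
  show ?thesis unfolding slab_line_root_def perp_proj_def by measurable
qed

lemma slab_line_root_sq:
  fixes x :: "'a::euclidean_space \<Rightarrow> real"
  assumes c: "continuous_on UNIV x" and vanish: "\<And>w. B \<le> norm w \<Longrightarrow> x w = 0"
    and nonneg: "\<And>w. 0 \<le> x w" and u: "norm u = 1"
  shows "integrable lborel (\<lambda>v. (slab_line_root u x v)\<^sup>2)"
    and "(\<integral>v. (slab_line_root u x v)\<^sup>2 \<partial>lborel) = (\<integral>w. x w \<partial>lborel)"
proof -
  have "0 \<le> (\<integral>s. x (perp_proj u v + s *\<^sub>R u) \<partial>lborel)" for v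
    by (rule Bochner_Integration.integral_nonneg) (simp add: nonneg)
  then have sq: "(slab_line_root u x v)\<^sup>2
      = indicator {0..1} (u \<bullet> v) *\<^sub>R (\<integral>s. x (perp_proj u v + s *\<^sub>R u) \<partial>lborel)" for v
    by (simp add: slab_line_root_def power_mult_distrib indicator_def)
  have "integrable lborel x" by (rule integrable_lborel_vanishing_outside_ball[OF c vanish])
  note slab = integral_lborel_eq_slab_integral[OF u this]
  show "integrable lborel (\<lambda>v. (slab_line_root u x v)\<^sup>2)"
    unfolding sq by (rule slab(1))
  show "(\<integral>v. (slab_line_root u x v)\<^sup>2 \<partial>lborel) = (\<integral>w. x w \<partial>lborel)"
    unfolding sq by (rule slab(2)[symmetric])
qed

lemma integral_slab_line_root_mult_le:
  fixes x y :: "'a::euclidean_space \<Rightarrow> real"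
  assumes x: "continuous_on UNIV x" "\<And>w. B \<le> norm w \<Longrightarrow> x w = 0" "\<And>w. 0 \<le> x w"
    and y: "continuous_on UNIV y" "\<And>w. B \<le> norm w \<Longrightarrow> y w = 0" "\<And>w. 0 \<le> y w"
    and u: "norm u = 1"
  shows "integrable lborel (\<lambda>v. slab_line_root u x v * slab_line_root u y v)"
    and "(\<integral>v. slab_line_root u x v * slab_line_root u y v \<partial>lborel)
      \<le> sqrt (\<integral>w. x w \<partial>lborel) * sqrt (\<integral>w. y w \<partial>lborel)"
  using Cauchy_Schwarz_integral[OF borel_measurable_slab_line_root[OF x(1)] borel_measurable_slab_line_root[OF y(1)]
      slab_line_root_sq(1)[OF x u] slab_line_root_sq(1)[OF y u]]
  by (simp_all add: slab_line_root_sq(2)[OF x u] slab_line_root_sq(2)[OF y u])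

lemma integral_norm_mult_le_L2norm:
  fixes f g :: "'a::euclidean_space \<Rightarrow> complex"
  assumes "continuous_on UNIV f" "\<And>v. B \<le> norm v \<Longrightarrow> f v = 0"
    and "continuous_on UNIV g" "\<And>v. B \<le> norm v \<Longrightarrow> g v = 0"
  shows "(\<integral>v. cmod (f v) * cmod (g v) \<partial>lborel) \<le> L2norm f * L2norm g"
  unfolding L2norm_def
  by (rule Cauchy_Schwarz_integral(2))
     (auto intro!: borel_measurable_continuous_onI integrable_lborel_vanishing_outside_ball[of _ B]
        continuous_intros assms)

section \<open>The resolvent in a unit direction\<close>

lemma slab_line_resolvent_le:
  fixes h g :: "'a::euclidean_space \<Rightarrow> complex" and v :: 'a
  assumes h: "Ck 1 h" and vh: "\<And>w. B \<le> norm w \<Longrightarrow> h w = 0" and vDh: "\<And>w. B \<le> norm w \<Longrightarrow> dir_deriv h u w = 0"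
    and g: "Ck 1 g" and vg: "\<And>w. B \<le> norm w \<Longrightarrow> g w = 0" and vDg: "\<And>w. B \<le> norm w \<Longrightarrow> dir_deriv g u w = 0"
    and u: "norm u = 1" and "0 < \<delta>" "0 < \<rho>"
  defines "r \<equiv> \<lambda>x. slab_line_root u x v"
    and "Eh \<equiv> \<lambda>w. cmod (h w) * cmod (dir_deriv h u w)" and "Eg \<equiv> \<lambda>w. cmod (g w) * cmod (dir_deriv g u w)"
  shows "indicator {0..1} (u \<bullet> v) * cmod (\<integral>s. cnj (h (perp_proj u v + s *\<^sub>R u)) * g (perp_proj u v + s *\<^sub>R u)
        / (complex_of_real \<delta> + \<i> * complex_of_real s) \<partial>lborel)
    \<le> 8 * r Eh * r Eg + 2 * sqrt 2 / \<rho> * r Eh * r (\<lambda>w. (cmod (g w))\<^sup>2)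
      + 3 * sqrt 2 * \<rho> * (r Eh * r (\<lambda>w. (cmod (dir_deriv g u w))\<^sup>2) + r Eg * r (\<lambda>w. (cmod (dir_deriv h u w))\<^sup>2))"
proof (cases "u \<bullet> v \<in> {0..1}")
  case True
  define p where "p = perp_proj u v"
  have far: "B \<le> norm (p + s *\<^sub>R u)" if "B + norm p \<le> \<bar>s\<bar>" for s
    using norm_line_ge[OF u that] .
  have line: "((\<lambda>s. f (p + s *\<^sub>R u)) has_vector_derivative dir_deriv f u (p + s *\<^sub>R u)) (at s)"
    "continuous_on UNIV (\<lambda>s. dir_deriv f u (p + s *\<^sub>R u))" if "Ck 1 f" for f s
    using has_vector_derivative_along_line[OF Ck_1D(1)[OF that]]
    by (auto intro!: continuous_on_compose2[OF continuous_on_dir_deriv[OF that]] continuous_intros)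
  have "cmod (\<integral>s. cnj (h (p + s *\<^sub>R u)) * g (p + s *\<^sub>R u) / (complex_of_real \<delta> + \<i> * complex_of_real s) \<partial>lborel)
    \<le> 8 * r Eh * r Eg + 2 * sqrt 2 / \<rho> * r Eh * r (\<lambda>w. (cmod (g w))\<^sup>2)
      + 3 * sqrt 2 * \<rho> * (r Eh * r (\<lambda>w. (cmod (dir_deriv g u w))\<^sup>2) + r Eg * r (\<lambda>w. (cmod (dir_deriv h u w))\<^sup>2))"
    using norm_integral_resolvent_le_energy[where M="B + norm p", OF line(1)[OF h] line(1)[OF g]
        line(2)[OF h] line(2)[OF g] vh[OF far] vg[OF far] vDh[OF far] vDg[OF far] \<open>0 < \<delta>\<close> \<open>0 < \<rho>\<close>]
    using True by (simp add: r_def Eh_def Eg_def slab_line_root_def L2norm_def p_def)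
  then show ?thesis using True by (simp add: p_def)
qed (simp add: r_def slab_line_root_def)

lemma norm_integral_resolvent_slab_le:
  fixes h g :: "'a::euclidean_space \<Rightarrow> complex"
  assumes h: "Ck 1 h" and vh: "\<And>w. B \<le> norm w \<Longrightarrow> h w = 0" and vDh: "\<And>w. B \<le> norm w \<Longrightarrow> dir_deriv h u w = 0"
    and g: "Ck 1 g" and vg: "\<And>w. B \<le> norm w \<Longrightarrow> g w = 0" and vDg: "\<And>w. B \<le> norm w \<Longrightarrow> dir_deriv g u w = 0"
    and u: "norm u = 1" and "0 < \<delta>" "0 < \<rho>"
  defines "Eh \<equiv> \<lambda>w. cmod (h w) * cmod (dir_deriv h u w)" and "Eg \<equiv> \<lambda>w. cmod (g w) * cmod (dir_deriv g u w)"
  shows "cmod (\<integral>w. cnj (h w) * g w / (complex_of_real \<delta> + \<i> * complex_of_real (u \<bullet> w)) \<partial>lborel)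
    \<le> 8 * sqrt (\<integral>w. Eh w \<partial>lborel) * sqrt (\<integral>w. Eg w \<partial>lborel)
      + 2 * sqrt 2 / \<rho> * sqrt (\<integral>w. Eh w \<partial>lborel) * L2norm g
      + 3 * sqrt 2 * \<rho> * (sqrt (\<integral>w. Eh w \<partial>lborel) * L2norm (dir_deriv g u)
                          + sqrt (\<integral>w. Eg w \<partial>lborel) * L2norm (dir_deriv h u))"
proof -
  define f where "f w = cnj (h w) * g w / (complex_of_real \<delta> + \<i> * complex_of_real (u \<bullet> w))" for w
  define r where "r x v = slab_line_root u x v" for x v
  define gg Dg Dh where "gg w = (cmod (g w))\<^sup>2" and "Dg w = (cmod (dir_deriv g u w))\<^sup>2"
    and "Dh w = (cmod (dir_deriv h u w))\<^sup>2" for w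
  have ch: "continuous_on UNIV h" "continuous_on UNIV (dir_deriv h u)"
    and cg: "continuous_on UNIV g" "continuous_on UNIV (dir_deriv g u)"
    using Ck_1D(2) continuous_on_dir_deriv h g by auto
  have energy: "continuous_on UNIV x" "\<And>w. B \<le> norm w \<Longrightarrow> x w = 0" "\<And>w. 0 \<le> x w"
    if "x \<in> {Eh, Eg, gg, Dg, Dh}" for x
    using that by (auto simp: Eh_def Eg_def gg_def Dg_def Dh_def vh vg vDh vDg intro!: continuous_intros ch cg)
  have root_mult: "integrable lborel (\<lambda>v. r x v * r y v)"
    "(\<integral>v. r x v * r y v \<partial>lborel) \<le> sqrt (\<integral>w. x w \<partial>lborel) * sqrt (\<integral>w. y w \<partial>lborel)"
    if "x \<in> {Eh, Eg, gg, Dg, Dh}" "y \<in> {Eh, Eg, gg, Dg, Dh}" for x y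
    unfolding r_def using integral_slab_line_root_mult_le[OF energy[OF that(1)] energy[OF that(2)] u] by auto
  have "integrable lborel f"
    unfolding f_def using \<open>0 < \<delta>\<close>
    by (intro integrable_lborel_vanishing_outside_ball[of _ B] continuous_intros ch cg)
       (auto simp: vh complex_eq_iff)
  note slab = norm_integral_le_slab_integral_norm[OF u this]
  have f_line: "f (perp_proj u v + s *\<^sub>R u) = cnj (h (perp_proj u v + s *\<^sub>R u)) * g (perp_proj u v + s *\<^sub>R u)
      / (complex_of_real \<delta> + \<i> * complex_of_real s)" for v s
    by (simp add: f_def inner_perp_proj_add_scaleR[OF u])
  have "cmod (\<integral>w. f w \<partial>lborel)
      \<le> (\<integral>v. indicator {0..1} (u \<bullet> v) * cmod (\<integral>s. f (perp_proj u v + s *\<^sub>R u) \<partial>lborel) \<partial>lborel)"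
    by (rule slab(2))
  also have "\<dots> \<le> (\<integral>v. 8 * (r Eh v * r Eg v) + 2 * sqrt 2 / \<rho> * (r Eh v * r gg v)
      + 3 * sqrt 2 * \<rho> * (r Eh v * r Dg v + r Eg v * r Dh v) \<partial>lborel)"
  proof (rule integral_mono)
    show "integrable lborel (\<lambda>v. indicator {0..1} (u \<bullet> v) * cmod (\<integral>s. f (perp_proj u v + s *\<^sub>R u) \<partial>lborel))"
      by (rule slab(1))
    show "integrable lborel (\<lambda>v. 8 * (r Eh v * r Eg v) + 2 * sqrt 2 / \<rho> * (r Eh v * r gg v)
      + 3 * sqrt 2 * \<rho> * (r Eh v * r Dg v + r Eg v * r Dh v))"
      using root_mult(1)[of Eh Eg] root_mult(1)[of Eh gg] root_mult(1)[of Eh Dg] root_mult(1)[of Eg Dh] by simp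
    show "indicator {0..1} (u \<bullet> v) * cmod (\<integral>s. f (perp_proj u v + s *\<^sub>R u) \<partial>lborel)
      \<le> 8 * (r Eh v * r Eg v) + 2 * sqrt 2 / \<rho> * (r Eh v * r gg v)
      + 3 * sqrt 2 * \<rho> * (r Eh v * r Dg v + r Eg v * r Dh v)" for v
      using slab_line_resolvent_le[OF h vh vDh g vg vDg u \<open>0 < \<delta>\<close> \<open>0 < \<rho>\<close>, where v=v]
      unfolding f_line
      by (simp add: r_def Eh_def Eg_def gg_def[abs_def] Dg_def[abs_def] Dh_def[abs_def] algebra_simps)
  qed
  also have "\<dots> = 8 * (\<integral>v. r Eh v * r Eg v \<partial>lborel) + 2 * sqrt 2 / \<rho> * (\<integral>v. r Eh v * r gg v \<partial>lborel)
      + 3 * sqrt 2 * \<rho> * ((\<integral>v. r Eh v * r Dg v \<partial>lborel) + (\<integral>v. r Eg v * r Dh v \<partial>lborel))"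
    using root_mult(1)[of Eh Eg] root_mult(1)[of Eh gg] root_mult(1)[of Eh Dg] root_mult(1)[of Eg Dh] by simp
  also have "\<dots> \<le> 8 * (sqrt (\<integral>w. Eh w \<partial>lborel) * sqrt (\<integral>w. Eg w \<partial>lborel))
      + 2 * sqrt 2 / \<rho> * (sqrt (\<integral>w. Eh w \<partial>lborel) * sqrt (\<integral>w. gg w \<partial>lborel))
      + 3 * sqrt 2 * \<rho> * (sqrt (\<integral>w. Eh w \<partial>lborel) * sqrt (\<integral>w. Dg w \<partial>lborel)
                          + sqrt (\<integral>w. Eg w \<partial>lborel) * sqrt (\<integral>w. Dh w \<partial>lborel))"
    using root_mult(2)[of Eh Eg] root_mult(2)[of Eh gg] root_mult(2)[of Eh Dg] root_mult(2)[of Eg Dh] \<open>0 < \<rho>\<close>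
    by (intro add_mono mult_left_mono) auto
  finally show ?thesis
    by (simp add: f_def L2norm_def gg_def Dg_def Dh_def algebra_simps)
qed

lemma le_ten_mult_if_le_for_all_scales:
  fixes Z a a' b b' A B :: real
  assumes "0 \<le> a" "0 \<le> a'" "0 \<le> b" "0 \<le> b'"
    and A: "0 \<le> A" "A \<le> a * a'" and B: "0 \<le> B" "B \<le> b * b'"
    and Z: "\<And>\<rho>. 0 < \<rho> \<Longrightarrow> Z \<le> 8 * sqrt A * sqrt B + 2 * sqrt 2 / \<rho> * sqrt A * b
                 + 3 * sqrt 2 * \<rho> * (sqrt A * b' + sqrt B * a')"
  shows "Z \<le> 10 * (a' * b + a * b')"
proof -
  define X Y where "X = a' * b" and "Y = a * b'"
  define P where "P = sqrt A * sqrt B"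
  have "0 \<le> X" "0 \<le> Y" "0 \<le> P" using assms by (simp_all add: X_def Y_def P_def)
  have "A * B \<le> (a * a') * (b * b')"
    using assms by (intro mult_mono) auto
  then have "P \<le> sqrt (X * Y)"
    unfolding P_def X_def Y_def real_sqrt_mult[symmetric] by (simp add: algebra_simps)
  also have "\<dots> \<le> (X + Y) / 2" by (rule arith_geo_mean_sqrt[OF \<open>0 \<le> X\<close> \<open>0 \<le> Y\<close>])
  finally have P_le: "P \<le> (X + Y) / 2" .
  have "Z \<le> 8 * P + 2 * sqrt ((2 * sqrt 2 * sqrt A * b) * (3 * sqrt 2 * (sqrt A * b' + sqrt B * a')))"
    using Z assms by (intro le_add_optimal_scale) (simp_all add: P_def field_simps)
  also have "(2 * sqrt 2 * sqrt A * b) * (3 * sqrt 2 * (sqrt A * b' + sqrt B * a')) = 12 * (A * (b * b') + P * X)"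
    using A by (simp add: P_def X_def power2_eq_square algebra_simps real_sqrt_mult_self)
  also have "12 * (A * (b * b') + P * X) \<le> (3 * (X + Y))\<^sup>2"
  proof -
    have "A * (b * b') \<le> (a * a') * (b * b')"
      using assms by (intro mult_right_mono) auto
    also have "\<dots> = X * Y" by (simp add: X_def Y_def algebra_simps)
    also have "\<dots> \<le> ((X + Y) / 2)\<^sup>2"
      using zero_le_power2[of "X - Y"] by (simp add: power2_eq_square field_simps)
    finally have "A * (b * b') \<le> ((X + Y) / 2)\<^sup>2" .
    moreover have "P * X \<le> (X + Y) / 2 * (X + Y)"
      using P_le \<open>0 \<le> X\<close> \<open>0 \<le> Y\<close> \<open>0 \<le> P\<close> by (intro mult_mono) auto
    ultimately show ?thesis by (simp add: power2_eq_square field_simps)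
  qed
  finally have "Z \<le> 8 * P + 2 * sqrt ((3 * (X + Y))\<^sup>2)"
    by (simp add: real_sqrt_le_mono)
  then show ?thesis
    using P_le \<open>0 \<le> X\<close> \<open>0 \<le> Y\<close> by (simp add: X_def Y_def)
qed

lemma norm_integral_resolvent_unit_le:
  fixes h g :: "'a::euclidean_space \<Rightarrow> complex"
  assumes h: "Ck 1 h" "compact (closure {v. h v \<noteq> 0})" and g: "Ck 1 g" "compact (closure {v. g v \<noteq> 0})"
    and u: "norm u = 1" and "0 < \<delta>"
  shows "cmod (\<integral>w. cnj (h w) * g w / (complex_of_real \<delta> + \<i> * complex_of_real (u \<bullet> w)) \<partial>lborel)
    \<le> 10 * (L2norm (dir_deriv h u) * L2norm g + L2norm h * L2norm (dir_deriv g u))"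
proof -
  obtain Bh where Bh: "\<And>v. Bh \<le> norm v \<Longrightarrow> h v = 0" "\<And>v. Bh \<le> norm v \<Longrightarrow> frechet_derivative h (at v) = (\<lambda>_. 0)"
    using vanishes_outside_ball_if_compact_support[OF h(2)] by metis
  obtain Bg where Bg: "\<And>v. Bg \<le> norm v \<Longrightarrow> g v = 0" "\<And>v. Bg \<le> norm v \<Longrightarrow> frechet_derivative g (at v) = (\<lambda>_. 0)"
    using vanishes_outside_ball_if_compact_support[OF g(2)] by metis
  define B where "B = max Bh Bg"
  have vh: "h v = 0" "dir_deriv h u v = 0" and vg: "g v = 0" "dir_deriv g u v = 0" if "B \<le> norm v" for v
    using that Bh Bg by (auto simp: B_def dir_deriv_def)
  have cont: "continuous_on UNIV h" "continuous_on UNIV (dir_deriv h u)"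
    "continuous_on UNIV g" "continuous_on UNIV (dir_deriv g u)"
    using Ck_1D(2) continuous_on_dir_deriv h(1) g(1) by auto
  let ?Eh = "\<integral>w. cmod (h w) * cmod (dir_deriv h u w) \<partial>lborel"
  let ?Eg = "\<integral>w. cmod (g w) * cmod (dir_deriv g u w) \<partial>lborel"
  show ?thesis
  proof (rule le_ten_mult_if_le_for_all_scales)
    show "?Eh \<le> L2norm h * L2norm (dir_deriv h u)" "?Eg \<le> L2norm g * L2norm (dir_deriv g u)"
      using vh vg by (auto intro!: integral_norm_mult_le_L2norm[of _ B] cont)
    show "0 \<le> ?Eh" "0 \<le> ?Eg"
      by (simp_all add: Bochner_Integration.integral_nonneg)
    show "cmod (\<integral>w. cnj (h w) * g w / (complex_of_real \<delta> + \<i> * complex_of_real (u \<bullet> w)) \<partial>lborel)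
      \<le> 8 * sqrt ?Eh * sqrt ?Eg + 2 * sqrt 2 / \<rho> * sqrt ?Eh * L2norm g
        + 3 * sqrt 2 * \<rho> * (sqrt ?Eh * L2norm (dir_deriv g u) + sqrt ?Eg * L2norm (dir_deriv h u))"
      if "0 < \<rho>" for \<rho>
      by (rule norm_integral_resolvent_slab_le[OF h(1) vh g(1) vg u \<open>0 < \<delta>\<close> that])
  qed (simp_all add: L2norm_nonneg)
qed

lemma grad_L2norm_le_H1norm: "grad_L2norm f \<le> H1norm f"
proof -
  have "0 \<le> grad_L2norm f"
    unfolding grad_L2norm_def by (simp add: Bochner_Integration.integral_nonneg sum_nonneg)
  then show ?thesis
    unfolding H1norm_def by (simp add: real_le_rsqrt)
qed

lemma resolvent_pairing_eq_unit_direction: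
  assumes "k \<noteq> 0"
  shows "resolvent_pairing h \<epsilon> k g = complex_of_real (1 / norm k) *
    (\<integral>v. cnj (h v) * g v / (complex_of_real (\<epsilon> / norm k) + \<i> * complex_of_real (sgn k \<bullet> v)) \<partial>lborel)"
proof -
  have "complex_of_real \<epsilon> + \<i> * complex_of_real (k \<bullet> v)
      = complex_of_real (norm k) * (complex_of_real (\<epsilon> / norm k) + \<i> * complex_of_real (sgn k \<bullet> v))" for v
    using assms by (simp add: complex_eq_iff sgn_div_norm inner_scaleR_left power2_eq_square)
  then show ?thesis
    unfolding resolvent_pairing_def using assms
    by (simp add: integral_mult_right_zero[symmetric] field_simps)
qed

theorem lemma4p6:
  "\<exists>C::real. \<forall>(g::'a::euclidean_space \<Rightarrow> complex) h (k::'a) (\<epsilon>::real).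
      Cc_inf g \<longrightarrow> Cc_inf h \<longrightarrow> k \<noteq> 0 \<longrightarrow> \<epsilon> > 0 \<longrightarrow>
      cmod (resolvent_pairing h \<epsilon> k g)
        \<le> C / norm k * (H1norm h * L2norm g + L2norm h * grad_L2norm g)"
proof (intro exI allI impI)
  fix g h :: "'a \<Rightarrow> complex" and k :: 'a and \<epsilon> :: real
  assume g: "Cc_inf g" and h: "Cc_inf h" and "k \<noteq> 0" "\<epsilon> > 0"
  let ?u = "sgn k"
  have u: "norm ?u = 1" using \<open>k \<noteq> 0\<close> by (simp add: norm_sgn)
  have C1: "Ck 1 h" "Ck 1 g"
    by (rule Cc_inf_imp_Ck_1[OF h], rule Cc_inf_imp_Ck_1[OF g])
  have supp: "compact (closure {v. h v \<noteq> 0})" "compact (closure {v. g v \<noteq> 0})"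
    using h g unfolding Cc_inf_def by blast+
  have "cmod (resolvent_pairing h \<epsilon> k g) = 1 / norm k *
      cmod (\<integral>v. cnj (h v) * g v / (complex_of_real (\<epsilon> / norm k) + \<i> * complex_of_real (?u \<bullet> v)) \<partial>lborel)"
    unfolding resolvent_pairing_eq_unit_direction[OF \<open>k \<noteq> 0\<close>] norm_mult norm_of_real by simp
  also have "\<dots> \<le> 1 / norm k * (10 * (L2norm (dir_deriv h ?u) * L2norm g + L2norm h * L2norm (dir_deriv g ?u)))"
    using \<open>\<epsilon> > 0\<close> \<open>k \<noteq> 0\<close>
    by (intro mult_left_mono norm_integral_resolvent_unit_le C1 supp u) auto
  also have "\<dots> \<le> 1 / norm k * (10 * (H1norm h * L2norm g + L2norm h * grad_L2norm g))"
  proof -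
    have "L2norm (dir_deriv h ?u) \<le> H1norm h"
      using L2norm_dir_deriv_le_grad_L2norm[OF C1(1) supp(1) u] grad_L2norm_le_H1norm[of h] by linarith
    moreover have "L2norm (dir_deriv g ?u) \<le> grad_L2norm g"
      by (rule L2norm_dir_deriv_le_grad_L2norm[OF C1(2) supp(2) u])
    ultimately have "L2norm (dir_deriv h ?u) * L2norm g + L2norm h * L2norm (dir_deriv g ?u)
        \<le> H1norm h * L2norm g + L2norm h * grad_L2norm g"
      by (intro add_mono mult_right_mono mult_left_mono) (simp_all add: L2norm_nonneg)
    then show ?thesis by (intro mult_left_mono) auto
  qed
  finally show "cmod (resolvent_pairing h \<epsilon> k g) \<le> 10 / norm k * (H1norm h * L2norm g + L2norm h * grad_L2norm g)"
    by simp
qed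

end
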